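(* Let $s,\mu,h_t,\mathbf{V}$ be as below, let $A\in\mathbb{R}^{s\times s}$ and $P\in\mathbb{R}^{s\times s}$ both be weakly positive definite, and let $\mathcal{A},\mathcal{P}:\mathbf{V}\to\mathbf{V}^*$ be defined by $$\langle \mathcal{A}\mathbf{u},\mathbf{v}\rangle=\sum_{i}\langle u_i,v_i\rangle_{L^2}+h_t^{\mu}\sum_{i,j}a_{ij}\langle u_j,v_i\rangle_{H_0^1},\qquad \langle \mathcal{P}\mathbf{u},\mathbf{v}\rangle=\sum_{i}\langle u_i,v_i\rangle_{L^2}+h_t^{\mu}\sum_{i,j}p_{ij}\langle u_j,v_i\rangle_{H_0^1}.$$ Then $\mathcal{P}^{-1}\mathcal{A}:\mathbf{V}\to\mathbf{V}$ is an isomorphism and its condition number $\kappa(\mathcal{P}^{-1}\mathcal{A})=\|\mathcal{P}^{-1}\mathcal{A}\|_{\mathcal{L}(\mathbf{V},\mathbf{V})}\|\mathcal{A}^{-1}\mathcal{P}\|_{\mathcal{L}(\mathbf{V},\mathbf{V})}$ is bounded by a constant depending only on $A$, $P$ and $s$, independent of $h_t>0$. Moreover, if $V_h\subset V$ is any finite-dimensional subspace, $\mathbf{V}_h=V_h^s$, and $\mathcal{A}_h,\mathcal{P}_h:\mathbf{V}_h\to\mathbf{V}_h^*$ are the Galerkin restrictions of $\mathcal{A},\mathcal{P}$ to $\mathbf{V}_h$ (with matrix representations $\mathbb{I}^{s\times s}\otimes M+h_t^{\mu}A\otimes F$ and $\mathbb{I}^{s\times s}\otimes M+h_t^{\mu}P\otimes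 F$, where $M$ and $F$ are the mass and stiffness matrices $M_{\ell m}=\langle\phi_\ell,\phi_m\rangle_{L^2}$, $F_{\ell m}=\langle\phi_m,\phi_\ell\rangle_{H_0^1}$ for a basis $\{\phi_\ell\}$ of $V_h$), then the condition number of $\mathcal{P}_h^{-1}\mathcal{A}_h$ on $(\mathbf{V}_h,\|\cdot\|_{\mathbf{V}})$ is bounded by a constant independent of both $h_t$ and the subspace $V_h$ (in particular of the mesh size $h$).
   Context: A real matrix $A\in\mathbb{R}^{s\times s}$ is called weakly positive definite if there exists a symmetric positive definite matrix $C\in\mathbb{R}^{s\times s}$ such that $CA$ is positive definite, i.e. $x^TCAx>0$ for all nonzero $x\in\mathbb{R}^s$. Let $\Omega\subset\mathbb{R}^d$ be a bounded polygonal domain whose boundary is partitioned into disjoint parts $\partial\Omega_N,\partial\Omega_D$. Let $\alpha,\beta\in L^\infty(\Omega)$ with $\alpha>0$ (bounded below by a positive constant) and $\beta\ge 0$ on $\Omega$. Let $\mu\in\{1,2\}$, $h_t>0$, $s\in\mathbb{N}$. Define $\langle u,v\rangle_{L^2}=\int_\Omega uv$ and $\langle u,v\rangle_{H_0^1}=\int_\Omega(\alpha\nabla u\cdot\nabla v+\beta uv)$, with $\|u\|_{H_0^1}^2=\langle u,u\rangle_{H_0^1}$. Let $V$ be the space of $H^1(\Omega)$ functions vanishing on $\partial\Omega_D$, with norm $\|u\|_V^2=\|u\|_{L^2}^2+h_t^{\mu}\|u\|_{H_0^1}^2$, and $\mathbf{V}=V^s$ with $\|\mathbf{u}\|_{\mathbf{V}}^2=\sum_i\|u_i\|_V^2$;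 $\mathbf{V}^*$ is its dual. In particular this applies when $A$ is the Butcher matrix of an A-stable IRK or IRKN method and $P$ is a weakly positive definite approximation of $A$ (e.g. $P=LD$ or $P=DU$ from the LDU factorization $A=LDU$, when these are weakly positive definite). *)

theory Defs
  imports "HOL-Analysis.Analysis"
begin

definition weakly_pos_def :: "real^'n^'n \<Rightarrow> bool" where
  "weakly_pos_def A \<longleftrightarrow> (\<exists>C::real^'n^'n. transpose C = C
      \<and> (\<forall>x::real^'n. x \<noteq> 0 \<longrightarrow> x \<bullet> (C *v x) > 0)
      \<and> (\<forall>x::real^'n. x \<noteq> 0 \<longrightarrow> x \<bullet> ((C ** A) *v x) > 0))"

text \<open>Abstract setting for the space V with the L2 inner product l2 and the
  H_0^1 inner product h1: V is a real subspace, l2 and h1 are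
  symmetric bilinear on V, l2 is positive definite, h1 positive semidefinite,
  and V is complete w.r.t. the norm sqrt(l2 u u + h1 u u).\<close>
definition sym_bilinear_on :: "'v::real_vector set \<Rightarrow> ('v \<Rightarrow> 'v \<Rightarrow> real) \<Rightarrow> bool" where
  "sym_bilinear_on V b \<longleftrightarrow>
     (\<forall>u\<in>V. \<forall>v\<in>V. b u v = b v u)
   \<and> (\<forall>u\<in>V. \<forall>v\<in>V. \<forall>w\<in>V. b (u + v) w = b u w + b v w)
   \<and> (\<forall>c. \<forall>u\<in>V. \<forall>w\<in>V. b (c *\<^sub>R u) w = c * b u w)"

definition energy_space :: "'v::real_vector set \<Rightarrow> ('v \<Rightarrow> 'v \<Rightarrow> real) \<Rightarrow> ('v \<Rightarrow> 'v \<Rightarrow> real) \<Rightarrow> bool" where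
  "energy_space V l2 h1 \<longleftrightarrow>
     subspace V \<and> sym_bilinear_on V l2 \<and> sym_bilinear_on V h1
   \<and> (\<forall>u\<in>V. u \<noteq> 0 \<longrightarrow> l2 u u > 0)
   \<and> (\<forall>u\<in>V. h1 u u \<ge> 0)
   \<and> (\<forall>x::nat \<Rightarrow> 'v. (\<forall>n. x n \<in> V) \<longrightarrow>
        (\<forall>e>0. \<exists>N. \<forall>m\<ge>N. \<forall>n\<ge>N. sqrt (l2 (x m - x n) (x m - x n) + h1 (x m - x n) (x m - x n)) < e)
        \<longrightarrow> (\<exists>y\<in>V. (\<lambda>n. sqrt (l2 (x n - y) (x n - y) + h1 (x n - y) (x n - y))) \<longlonglongrightarrow> 0))"

text \<open>Product space W^s, s = CARD('n), realised as functions 'n => 'v.\<close>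
definition vecs :: "'v set \<Rightarrow> ('n::finite \<Rightarrow> 'v) set" where
  "vecs W = {u. \<forall>i. u i \<in> W}"

definition normV :: "('v \<Rightarrow> 'v \<Rightarrow> real) \<Rightarrow> ('v \<Rightarrow> 'v \<Rightarrow> real) \<Rightarrow> nat \<Rightarrow> real
                      \<Rightarrow> ('n::finite \<Rightarrow> 'v) \<Rightarrow> real" where
  "normV l2 h1 \<mu> ht u = sqrt (\<Sum>i\<in>UNIV. l2 (u i) (u i) + ht ^ \<mu> * h1 (u i) (u i))"

definition form_op :: "('v::real_vector \<Rightarrow> 'v \<Rightarrow> real) \<Rightarrow> ('v \<Rightarrow> 'v \<Rightarrow> real) \<Rightarrow> nat \<Rightarrow> real
                      \<Rightarrow> real^'n^'n \<Rightarrow> 'v set \<Rightarrow> ('n::finite \<Rightarrow> 'v) \<Rightarrow> (('n \<Rightarrow> 'v) \<Rightarrow> real)" where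
  "form_op l2 h1 \<mu> ht M W u = (\<lambda>v. if v \<in> vecs W then
      (\<Sum>i\<in>UNIV. l2 (u i) (v i)) + ht ^ \<mu> * (\<Sum>i\<in>UNIV. \<Sum>j\<in>UNIV. M $ i $ j * h1 (u j) (v i))
    else 0)"

definition dual_space :: "('v::real_vector \<Rightarrow> 'v \<Rightarrow> real) \<Rightarrow> ('v \<Rightarrow> 'v \<Rightarrow> real) \<Rightarrow> nat \<Rightarrow> real
                      \<Rightarrow> 'v set \<Rightarrow> (('n::finite \<Rightarrow> 'v) \<Rightarrow> real) set" where
  "dual_space l2 h1 \<mu> ht W = {f.
      (\<forall>v. v \<notin> vecs W \<longrightarrow> f v = 0)
    \<and> (\<forall>v\<in>vecs W. \<forall>w\<in>vecs W. f (\<lambda>i. v i + w i) = f v + f w)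
    \<and> (\<forall>c. \<forall>v\<in>vecs W. f (\<lambda>i. c *\<^sub>R v i) = c * f v)
    \<and> (\<exists>K. \<forall>v\<in>vecs W. \<bar>f v\<bar> \<le> K * normV l2 h1 \<mu> ht v)}"

definition bounded_op :: "('v::real_vector \<Rightarrow> 'v \<Rightarrow> real) \<Rightarrow> ('v \<Rightarrow> 'v \<Rightarrow> real) \<Rightarrow> nat \<Rightarrow> real
                      \<Rightarrow> 'v set \<Rightarrow> (('n::finite \<Rightarrow> 'v) \<Rightarrow> ('n \<Rightarrow> 'v)) \<Rightarrow> bool" where
  "bounded_op l2 h1 \<mu> ht W T \<longleftrightarrow>
      T ` vecs W \<subseteq> vecs W
    \<and> (\<forall>v\<in>vecs W. \<forall>w\<in>vecs W. T (\<lambda>i. v i + w i) = (\<lambda>i. T v i + T w i))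
    \<and> (\<forall>c. \<forall>v\<in>vecs W. T (\<lambda>i. c *\<^sub>R v i) = (\<lambda>i. c *\<^sub>R T v i))
    \<and> (\<exists>K. \<forall>v\<in>vecs W. normV l2 h1 \<mu> ht (T v) \<le> K * normV l2 h1 \<mu> ht v)"

definition op_norm :: "('v::real_vector \<Rightarrow> 'v \<Rightarrow> real) \<Rightarrow> ('v \<Rightarrow> 'v \<Rightarrow> real) \<Rightarrow> nat \<Rightarrow> real
                      \<Rightarrow> 'v set \<Rightarrow> (('n::finite \<Rightarrow> 'v) \<Rightarrow> ('n \<Rightarrow> 'v)) \<Rightarrow> real" where
  "op_norm l2 h1 \<mu> ht W T = Inf {K. 0 \<le> K \<and>
      (\<forall>v\<in>vecs W. normV l2 h1 \<mu> ht (T v) \<le> K * normV l2 h1 \<mu> ht v)}"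

definition precond_bound :: "('v::real_vector \<Rightarrow> 'v \<Rightarrow> real) \<Rightarrow> ('v \<Rightarrow> 'v \<Rightarrow> real) \<Rightarrow> nat \<Rightarrow> real
                      \<Rightarrow> real^'n::finite^'n \<Rightarrow> real^'n^'n \<Rightarrow> 'v set \<Rightarrow> real \<Rightarrow> bool" where
  "precond_bound l2 h1 \<mu> ht A P W C \<longleftrightarrow>
    (let Aop = form_op l2 h1 \<mu> ht A W;
         Pop = form_op l2 h1 \<mu> ht P W;
         PinvA = the_inv_into (vecs W) Pop \<circ> Aop;
         AinvP = the_inv_into (vecs W) Aop \<circ> Pop
     in bij_betw Aop (vecs W) (dual_space l2 h1 \<mu> ht W)
      \<and> bij_betw Pop (vecs W) (dual_space l2 h1 \<mu> ht W)
      \<and> bij_betw PinvA (vecs W) (vecs W)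
      \<and> bounded_op l2 h1 \<mu> ht W PinvA
      \<and> bounded_op l2 h1 \<mu> ht W AinvP
      \<and> (\<forall>u\<in>vecs W. AinvP (PinvA u) = u)
      \<and> op_norm l2 h1 \<mu> ht W PinvA * op_norm l2 h1 \<mu> ht W AinvP \<le> C)"

end

theory Submission
  imports Defs
begin

text \<open>Testing the stage form of a matrix M with C u, where C is the symmetric positive definite
  matrix witnessing weak positive definiteness of M, makes it coercive with respect to the
  ht-weighted energy norm: the L2 part is bounded below through C, the H1 part through C M, and
  the factor ht^\<mu> appears on both sides. Together with the trivial continuity bound, Lax-Milgram
  makes the operators induced by A and P isomorphisms onto the dual space, and the same
  coercivity estimate bounds P^{-1} A and A^{-1} P by constants depending only on A, P and their
  witnesses. The argument uses only the structure of the energy space, so it applies verbatim to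
  every finite-dimensional subspace, which is complete.\<close>

section \<open>Positive semidefinite symmetric forms on a subspace\<close>

locale psd_form =
  fixes X :: "'a::real_vector set" and b :: "'a \<Rightarrow> 'a \<Rightarrow> real"
  assumes subspace: "subspace X" and sym_bilinear: "sym_bilinear_on X b"
    and nonneg: "\<And>u. u \<in> X \<Longrightarrow> b u u \<ge> 0"
begin

lemma sym: "u \<in> X \<Longrightarrow> v \<in> X \<Longrightarrow> b u v = b v u"
  using sym_bilinear unfolding sym_bilinear_on_def by blast

lemma add_left: "u \<in> X \<Longrightarrow> v \<in> X \<Longrightarrow> w \<in> X \<Longrightarrow> b (u + v) w = b u w + b v w"
  using sym_bilinear unfolding sym_bilinear_on_def by blast

lemma scaleR_left: "u \<in> X \<Longrightarrow> w \<in> X \<Longrightarrow> b (c *\<^sub>R u) w = c * b u w"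
  using sym_bilinear unfolding sym_bilinear_on_def by blast

lemma closed [simp]:
  "u \<in> X \<Longrightarrow> v \<in> X \<Longrightarrow> u + v \<in> X" "u \<in> X \<Longrightarrow> c *\<^sub>R u \<in> X"
  "u \<in> X \<Longrightarrow> v \<in> X \<Longrightarrow> u - v \<in> X" "0 \<in> X" "u \<in> X \<Longrightarrow> - u \<in> X"
  using subspace by (auto simp: subspace_add subspace_scale subspace_diff subspace_0 subspace_neg)

lemma add_right: "u \<in> X \<Longrightarrow> v \<in> X \<Longrightarrow> w \<in> X \<Longrightarrow> b w (u + v) = b w u + b w v"
  using add_left sym closed by metis

lemma scaleR_right: "u \<in> X \<Longrightarrow> w \<in> X \<Longrightarrow> b w (c *\<^sub>R u) = c * b w u"
  using scaleR_left sym closed by metis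

lemma diff_left: "u \<in> X \<Longrightarrow> v \<in> X \<Longrightarrow> w \<in> X \<Longrightarrow> b (u - v) w = b u w - b v w"
  using add_left[of "u - v" v w] by simp

lemma diff_right: "u \<in> X \<Longrightarrow> v \<in> X \<Longrightarrow> w \<in> X \<Longrightarrow> b w (u - v) = b w u - b w v"
  using diff_left sym closed by metis

lemma zero_left [simp]: "w \<in> X \<Longrightarrow> b 0 w = 0"
  using scaleR_left[of 0 w 0] by simp

lemma zero_right [simp]: "w \<in> X \<Longrightarrow> b w 0 = 0"
  using zero_left sym closed by metis

lemma sum_left:
  "finite I \<Longrightarrow> (\<And>i. i \<in> I \<Longrightarrow> f i \<in> X) \<Longrightarrow> w \<in> X \<Longrightarrow> b (\<Sum>i\<in>I. f i) w = (\<Sum>i\<in>I. b (f i) w)"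
proof (induction I rule: finite_induct)
  case (insert x F)
  have "(\<Sum>i\<in>F. f i) \<in> X" using insert subspace by (intro subspace_sum) auto
  then show ?case using insert by (simp add: add_left)
qed simp

lemma sum_right:
  assumes "finite I" "\<And>i. i \<in> I \<Longrightarrow> f i \<in> X" "w \<in> X"
  shows "b w (\<Sum>i\<in>I. f i) = (\<Sum>i\<in>I. b w (f i))"
proof -
  have "(\<Sum>i\<in>I. f i) \<in> X" using assms subspace by (intro subspace_sum) auto
  then have "b w (\<Sum>i\<in>I. f i) = b (\<Sum>i\<in>I. f i) w" using assms sym by blast
  also have "\<dots> = (\<Sum>i\<in>I. b w (f i))" using assms sym by (simp add: sum_left)
  finally show ?thesis .
qed

lemma bilinear_sum:
  assumes "finite I" "finite J" "\<And>k. x k \<in> X" "\<And>m. y m \<in> X"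
  shows "b (\<Sum>k\<in>I. a k *\<^sub>R x k) (\<Sum>m\<in>J. c m *\<^sub>R y m) = (\<Sum>k\<in>I. \<Sum>m\<in>J. a k * c m * b (x k) (y m))"
proof -
  have "(\<Sum>m\<in>J. c m *\<^sub>R y m) \<in> X" by (intro subspace_sum subspace closed(2) assms(4))
  then show ?thesis
    using assms by (simp add: sum_left sum_right scaleR_left scaleR_right sum_distrib_left mult_ac)
qed

lemma square_add: "u \<in> X \<Longrightarrow> v \<in> X \<Longrightarrow> b (u + v) (u + v) = b u u + 2 * b u v + b v v"
  using add_left add_right sym by (simp add: algebra_simps)

lemma square_diff: "u \<in> X \<Longrightarrow> v \<in> X \<Longrightarrow> b (u - v) (u - v) = b u u - 2 * b u v + b v v"
  using sym[of u v] by (simp add: diff_left diff_right)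

lemma square_scaleR: "u \<in> X \<Longrightarrow> b (c *\<^sub>R u) (c *\<^sub>R u) = c\<^sup>2 * b u u"
  by (simp add: scaleR_left scaleR_right power2_eq_square)

lemma Cauchy_Schwarz:
  assumes "u \<in> X" "v \<in> X" shows "(b u v)\<^sup>2 \<le> b u u * b v v"
proof -
  have q: "0 \<le> b u u - 2 * t * b u v + t\<^sup>2 * b v v" for t
  proof -
    have "0 \<le> b (u - t *\<^sub>R v) (u - t *\<^sub>R v)" using nonneg assms by simp
    also have "\<dots> = b u u - 2 * t * b u v + t\<^sup>2 * b v v"
      using assms square_diff[of u "t *\<^sub>R v"] scaleR_right[of v u t] square_scaleR[of v t] by simp
    finally show ?thesis .
  qed
  show ?thesis
  proof (cases "b v v = 0")
    case True
    have "b u v = 0"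
    proof (rule ccontr)
      assume n: "b u v \<noteq> 0"
      have "0 \<le> b u u - 2 * ((b u u + 1) / (2 * b u v)) * b u v"
        using q[of "(b u u + 1) / (2 * b u v)"] True by simp
      then show False using n by (simp add: field_simps)
    qed
    then show ?thesis using True by simp
  next
    case False
    then have bp: "b v v > 0" using nonneg[of v] assms by linarith
    have "0 \<le> b u u - 2 * (b u v / b v v) * b u v + (b u v / b v v)\<^sup>2 * b v v"
      using q by blast
    also have "\<dots> = b u u - (b u v)\<^sup>2 / b v v"
      using bp by (simp add: field_simps power2_eq_square)
    finally have "(b u v)\<^sup>2 / b v v \<le> b u u" by simp
    then show ?thesis using bp by (simp add: field_simps)
  qed
qed

lemma Cauchy_Schwarz_abs:
  assumes "u \<in> X" "v \<in> X" shows "\<bar>b u v\<bar> \<le> sqrt (b u u) * sqrt (b v v)"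
  using real_sqrt_le_mono[OF Cauchy_Schwarz[OF assms]] by (simp add: real_sqrt_mult)

lemma triangle:
  assumes "u \<in> X" "v \<in> X"
  shows "sqrt (b (u + v) (u + v)) \<le> sqrt (b u u) + sqrt (b v v)"
proof -
  have "b (u + v) (u + v) \<le> b u u + 2 * (sqrt (b u u) * sqrt (b v v)) + b v v"
    using square_add[OF assms] Cauchy_Schwarz_abs[OF assms] by linarith
  also have "\<dots> = (sqrt (b u u) + sqrt (b v v))\<^sup>2"
    using nonneg assms by (simp add: power2_eq_square algebra_simps)
  finally show ?thesis using nonneg assms by (simp add: real_le_lsqrt)
qed

lemma triangle_diff:
  "u \<in> X \<Longrightarrow> v \<in> X \<Longrightarrow> w \<in> X \<Longrightarrow>
   sqrt (b (u - w) (u - w)) \<le> sqrt (b (u - v) (u - v)) + sqrt (b (v - w) (v - w))"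
  using triangle[of "u - v" "v - w"] by simp

end

section \<open>Completeness, best approximation and Lax-Milgram\<close>

definition complete_wrt :: "'a::real_vector set \<Rightarrow> ('a \<Rightarrow> 'a \<Rightarrow> real) \<Rightarrow> bool" where
  "complete_wrt X b \<longleftrightarrow> (\<forall>x. (\<forall>n. x n \<in> X) \<longrightarrow>
     (\<forall>e>0. \<exists>N. \<forall>m\<ge>N. \<forall>n\<ge>N. sqrt (b (x m - x n) (x m - x n)) < e) \<longrightarrow>
     (\<exists>y\<in>X. (\<lambda>n. sqrt (b (x n - y) (x n - y))) \<longlonglongrightarrow> 0))"

lemma complete_wrtD:
  assumes "complete_wrt X b" "\<And>n. x n \<in> X"
    "\<And>e. e > 0 \<Longrightarrow> \<exists>N. \<forall>m\<ge>N. \<forall>n\<ge>N. sqrt (b (x m - x n) (x m - x n)) < e"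
  obtains y where "y \<in> X" "(\<lambda>n. sqrt (b (x n - y) (x n - y))) \<longlonglongrightarrow> 0"
  using assms unfolding complete_wrt_def by blast

context psd_form
begin

lemma parallelogram_law:
  "u \<in> X \<Longrightarrow> v \<in> X \<Longrightarrow> b (u - v) (u - v) + b (u + v) (u + v) = 2 * b u u + 2 * b v v"
  by (simp add: square_diff square_add)

lemma best_approximation_exists:
  assumes S: "subspace S" "S \<subseteq> X" "complete_wrt S b" and z: "z \<in> X"
  shows "\<exists>p\<in>S. \<forall>s\<in>S. b (z - p) (z - p) \<le> b (z - s) (z - s)"
proof -
  define d where "d = (INF s\<in>S. b (z - s) (z - s))"
  have dist_nonneg: "0 \<le> b (z - s) (z - s)" if "s \<in> S" for s
    using nonneg[of "z - s"] that S(2) z by auto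
  have bdd: "bdd_below ((\<lambda>s. b (z - s) (z - s)) ` S)"
    using dist_nonneg by (rule bdd_belowI2)
  have S_ne: "S \<noteq> {}" using S subspace_0 by blast
  have d_le: "d \<le> b (z - s) (z - s)" if "s \<in> S" for s
    unfolding d_def using bdd that by (rule cINF_lower)
  define ep where "ep = (\<lambda>n::nat. inverse (real (Suc n)))"
  have ep0: "ep \<longlonglongrightarrow> 0"
    unfolding ep_def by (rule LIMSEQ_inverse_real_of_nat)
  have "\<exists>s\<in>S. b (z - s) (z - s) < d + ep n" for n
  proof -
    have "(INF s\<in>S. b (z - s) (z - s)) < d + ep n" unfolding d_def ep_def by simp
    then show ?thesis using cINF_less_iff[OF S_ne bdd] by blast
  qed
  then obtain x where x: "\<And>n. x n \<in> S" "\<And>n. b (z - x n) (z - x n) < d + ep n"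
    by metis
  have xX: "x n \<in> X" for n using x S by auto
  \<comment> \<open>The midpoint of two near-minimisers is a competitor, so the parallelogram law forces
    near-minimisers to be close.\<close>
  have close: "b (x n - x m) (x n - x m) \<le> 2 * ep m + 2 * ep n" for m n
  proof -
    have "(1/2) *\<^sub>R (x m + x n) \<in> S" using S x by (simp add: subspace_add subspace_scale)
    then have "d \<le> b (z - (1/2) *\<^sub>R (x m + x n)) (z - (1/2) *\<^sub>R (x m + x n))" by (rule d_le)
    also have "z - (1/2) *\<^sub>R (x m + x n) = (1/2) *\<^sub>R ((z - x m) + (z - x n))"
    proof -
      have "z = (1/2) *\<^sub>R z + (1/2) *\<^sub>R z" by (simp flip: scaleR_left_distrib)
      then show ?thesis by (simp add: algebra_simps)
    qed
    also have "b ((1/2) *\<^sub>R ((z - x m) + (z - x n))) ((1/2) *\<^sub>R ((z - x m) + (z - x n)))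
        = (1/4) * b ((z - x m) + (z - x n)) ((z - x m) + (z - x n))"
      using xX z square_scaleR[of "(z - x m) + (z - x n)" "1/2"] by (simp add: power2_eq_square)
    finally have "4 * d \<le> b ((z - x m) + (z - x n)) ((z - x m) + (z - x n))" by simp
    moreover have "(z - x m) - (z - x n) = x n - x m" by simp
    then have "b (x n - x m) (x n - x m) + b ((z - x m) + (z - x n)) ((z - x m) + (z - x n))
        = 2 * b (z - x m) (z - x m) + 2 * b (z - x n) (z - x n)"
      using parallelogram_law[of "z - x m" "z - x n"] xX z by simp
    ultimately show ?thesis using x(2)[of m] x(2)[of n] by linarith
  qed
  have "\<exists>N. \<forall>m\<ge>N. \<forall>n\<ge>N. sqrt (b (x m - x n) (x m - x n)) < e" if e: "e > 0" for e
  proof -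
    obtain N where N: "\<And>n. n \<ge> N \<Longrightarrow> ep n < e\<^sup>2 / 4"
      using order_tendstoD(2)[OF ep0, of "e\<^sup>2 / 4"] e unfolding eventually_sequentially by auto
    have "sqrt (b (x m - x n) (x m - x n)) < e" if "m \<ge> N" "n \<ge> N" for m n
    proof -
      have "b (x m - x n) (x m - x n) < e\<^sup>2"
        using close[of m n] N[OF that(1)] N[OF that(2)] by linarith
      then have "sqrt (b (x m - x n) (x m - x n)) < sqrt (e\<^sup>2)" by (rule real_sqrt_less_mono)
      then show ?thesis using e by simp
    qed
    then show ?thesis by blast
  qed
  then obtain p where p: "p \<in> S" "(\<lambda>n. sqrt (b (x n - p) (x n - p))) \<longlonglongrightarrow> 0"
    using complete_wrtD[OF S(3), of x, OF x(1)] by blast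
  have pX: "p \<in> X" using p S by blast
  have bound: "\<forall>n. sqrt (b (z - p) (z - p)) \<le> sqrt (d + ep n) + sqrt (b (x n - p) (x n - p))"
  proof
    fix n
    have "sqrt (b (z - x n) (z - x n)) \<le> sqrt (d + ep n)" using x(2)[of n] by simp
    then show "sqrt (b (z - p) (z - p)) \<le> sqrt (d + ep n) + sqrt (b (x n - p) (x n - p))"
      using triangle_diff[OF z xX[of n] pX] by linarith
  qed
  have "(\<lambda>n. sqrt (d + ep n) + sqrt (b (x n - p) (x n - p))) \<longlonglongrightarrow> sqrt (d + 0) + 0"
    by (intro tendsto_intros p(2) ep0)
  then have "(\<lambda>n. sqrt (d + ep n) + sqrt (b (x n - p) (x n - p))) \<longlonglongrightarrow> sqrt d" by simp
  from LIMSEQ_le_const[OF this] bound have "sqrt (b (z - p) (z - p)) \<le> sqrt d" by blast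
  then have "b (z - p) (z - p) \<le> d" by simp
  then show ?thesis using p(1) d_le by (meson order_trans)
qed

lemma best_approximation_orthogonal:
  assumes S: "subspace S" "S \<subseteq> X" and z: "z \<in> X" and p: "p \<in> S"
    and min: "\<And>s. s \<in> S \<Longrightarrow> b (z - p) (z - p) \<le> b (z - s) (z - s)"
    and s: "s \<in> S"
  shows "b (z - p) s = 0"
proof -
  define c where "c = b (z - p) s"
  define B where "B = b s s"
  have sX: "s \<in> X" and zpX: "z - p \<in> X" using s p S z by auto
  have B0: "B \<ge> 0" unfolding B_def using nonneg sX by auto
  have q: "0 \<le> - 2 * t * c + t\<^sup>2 * B" for t
  proof -
    have "p + t *\<^sub>R s \<in> S" using S p s by (simp add: subspace_add subspace_scale)
    from min[OF this] have "b (z - p) (z - p) \<le> b ((z - p) - t *\<^sub>R s) ((z - p) - t *\<^sub>R s)"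
      by (simp add: algebra_simps)
    then show ?thesis
      using zpX sX square_diff[of "z - p" "t *\<^sub>R s"] scaleR_right[of s "z - p" t] square_scaleR[of s t]
      unfolding c_def B_def by simp
  qed
  \<comment> \<open>Testing with t = c / (B + 1) gives 0 \<le> -t^2 (B + 2).\<close>
  define t where "t = c / (B + 1)"
  have tc: "c = t * (B + 1)" unfolding t_def using B0 by simp
  have "0 \<le> - (t\<^sup>2 * (B + 2))" using q[of t] unfolding tc by (simp add: algebra_simps power2_eq_square)
  then have "t = 0" using B0 by (simp add: mult_le_0_iff)
  then show ?thesis using tc c_def by simp
qed

lemma orthogonal_projection_exists:
  assumes "subspace S" "S \<subseteq> X" "complete_wrt S b" "z \<in> X"
  shows "\<exists>p\<in>S. \<forall>s\<in>S. b (z - p) s = 0"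
  using best_approximation_exists[OF assms] best_approximation_orthogonal[OF assms(1,2,4)] by blast

end

definition bounded_functional_on :: "'a::real_vector set \<Rightarrow> ('a \<Rightarrow> 'a \<Rightarrow> real) \<Rightarrow> ('a \<Rightarrow> real) \<Rightarrow> bool" where
  "bounded_functional_on X b f \<longleftrightarrow>
     (\<forall>v\<in>X. \<forall>w\<in>X. f (v + w) = f v + f w) \<and> (\<forall>c. \<forall>v\<in>X. f (c *\<^sub>R v) = c * f v)
   \<and> (\<exists>K. \<forall>v\<in>X. \<bar>f v\<bar> \<le> K * sqrt (b v v))"

context psd_form
begin

lemma complete_wrt_kernel:
  assumes C: "complete_wrt X b" and f: "bounded_functional_on X b f"
  shows "complete_wrt {v \<in> X. f v = 0} b"
  unfolding complete_wrt_def
proof (intro allI impI)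
  obtain K where K: "\<And>v. v \<in> X \<Longrightarrow> \<bar>f v\<bar> \<le> K * sqrt (b v v)"
    using f unfolding bounded_functional_on_def by blast
  fix x :: "nat \<Rightarrow> 'a" assume x: "\<forall>n. x n \<in> {v \<in> X. f v = 0}"
    and Cauchy: "\<forall>e>0. \<exists>N. \<forall>m\<ge>N. \<forall>n\<ge>N. sqrt (b (x m - x n) (x m - x n)) < e"
  then obtain y where y: "y \<in> X" "(\<lambda>n. sqrt (b (x n - y) (x n - y))) \<longlonglongrightarrow> 0"
    using C unfolding complete_wrt_def by blast
  have "\<bar>f y\<bar> \<le> K * sqrt (b (x n - y) (x n - y))" for n
  proof -
    have "f (x n) = f (x n - y) + f y" using f x y unfolding bounded_functional_on_def
      by (metis (mono_tags, lifting) closed(3) diff_add_cancel mem_Collect_eq)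
    then have "f y = - f (x n - y)" using x by simp
    then show ?thesis using K[of "x n - y"] x y by simp
  qed
  moreover have "(\<lambda>n. K * sqrt (b (x n - y) (x n - y))) \<longlonglongrightarrow> 0"
    using tendsto_mult_right_zero[OF y(2)] by simp
  ultimately have "\<bar>f y\<bar> \<le> 0" using LIMSEQ_le_const by blast
  then show "\<exists>y\<in>{v \<in> X. f v = 0}. (\<lambda>n. sqrt (b (x n - y) (x n - y))) \<longlonglongrightarrow> 0"
    using y by auto
qed

lemma complete_wrt_image:
  assumes C: "complete_wrt X b" and T: "\<And>u. u \<in> X \<Longrightarrow> T u \<in> X"
    and T_diff: "\<And>u w. u \<in> X \<Longrightarrow> w \<in> X \<Longrightarrow> T (u - w) = T u - T w"
    and lower: "\<And>u. u \<in> X \<Longrightarrow> \<alpha> * sqrt (b u u) \<le> sqrt (b (T u) (T u))" and \<alpha>: "\<alpha> > 0"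
    and upper: "\<And>u. u \<in> X \<Longrightarrow> sqrt (b (T u) (T u)) \<le> M * sqrt (b u u)"
  shows "complete_wrt (T ` X) b"
  unfolding complete_wrt_def
proof (intro allI impI)
  fix y :: "nat \<Rightarrow> 'a" assume "\<forall>n. y n \<in> T ` X"
    and Cauchy: "\<forall>e>0. \<exists>N. \<forall>m\<ge>N. \<forall>n\<ge>N. sqrt (b (y m - y n) (y m - y n)) < e"
  then have "\<forall>n. \<exists>u. u \<in> X \<and> y n = T u" by blast
  then obtain u where u: "\<And>n. u n \<in> X" "\<And>n. y n = T (u n)" by metis
  have "\<exists>N. \<forall>m\<ge>N. \<forall>n\<ge>N. sqrt (b (u m - u n) (u m - u n)) < e" if e: "e > 0" for e
  proof -
    obtain N where N: "\<forall>m\<ge>N. \<forall>n\<ge>N. sqrt (b (y m - y n) (y m - y n)) < \<alpha> * e"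
      using Cauchy \<alpha> e by (meson mult_pos_pos)
    have "sqrt (b (u m - u n) (u m - u n)) < e" if "m \<ge> N" "n \<ge> N" for m n
    proof -
      have "\<alpha> * sqrt (b (u m - u n) (u m - u n)) < \<alpha> * e"
        using lower[of "u m - u n"] u T_diff N that by fastforce
      then show ?thesis using \<alpha> by simp
    qed
    then show ?thesis by blast
  qed
  then obtain x where x: "x \<in> X" "(\<lambda>n. sqrt (b (u n - x) (u n - x))) \<longlonglongrightarrow> 0"
    using complete_wrtD[OF C, of u, OF u(1)] by blast
  have "(\<lambda>n. sqrt (b (y n - T x) (y n - T x))) \<longlonglongrightarrow> 0"
  proof (rule Lim_null_comparison)
    have "norm (sqrt (b (y n - T x) (y n - T x))) \<le> M * sqrt (b (u n - x) (u n - x))" for n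
      using upper[of "u n - x"] u x T_diff nonneg[of "T (u n - x)"] T[of "u n - x"] by simp
    then show "\<forall>\<^sub>F n in sequentially. norm (sqrt (b (y n - T x) (y n - T x)))
        \<le> M * sqrt (b (u n - x) (u n - x))" by simp
    show "(\<lambda>n. M * sqrt (b (u n - x) (u n - x))) \<longlonglongrightarrow> 0"
      using tendsto_mult_right_zero[OF x(2)] by simp
  qed
  then show "\<exists>z\<in>T ` X. (\<lambda>n. sqrt (b (y n - z) (y n - z))) \<longlonglongrightarrow> 0"
    using x by blast
qed

lemma complete_wrt_orthogonal_line:
  assumes S: "subspace S" "S \<subseteq> X" "complete_wrt S b"
    and w: "w \<in> X" "b w w > 0" "\<And>s. s \<in> S \<Longrightarrow> b s w = 0"
  shows "complete_wrt {s + k *\<^sub>R w | s k. s \<in> S} b"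
  unfolding complete_wrt_def
proof (intro allI impI)
  fix x :: "nat \<Rightarrow> 'a" assume "\<forall>n. x n \<in> {s + k *\<^sub>R w | s k. s \<in> S}"
    and Cauchy: "\<forall>e>0. \<exists>N. \<forall>m\<ge>N. \<forall>n\<ge>N. sqrt (b (x m - x n) (x m - x n)) < e"
  then have "\<forall>n. \<exists>sk. fst sk \<in> S \<and> x n = fst sk + snd sk *\<^sub>R w" by force
  then obtain sk where sk': "\<And>n. fst (sk n) \<in> S \<and> x n = fst (sk n) + snd (sk n) *\<^sub>R w"
    by metis
  define s k where "s = (\<lambda>n. fst (sk n))" and "k = (\<lambda>n. snd (sk n))"
  have sk: "\<And>n. s n \<in> S" "\<And>n. x n = s n + k n *\<^sub>R w" using sk' unfolding s_def k_def by auto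
  have sX: "s n \<in> X" for n using sk S by auto
  \<comment> \<open>Pythagoras splits the Cauchy condition into one for s and one for k.\<close>
  have Pythagoras: "b (x m - x n) (x m - x n) = b (s m - s n) (s m - s n) + (k m - k n)\<^sup>2 * b w w"
    for m n
  proof -
    have "x m - x n = (s m - s n) + (k m - k n) *\<^sub>R w" using sk(2) by (simp add: algebra_simps)
    moreover have "b (s m - s n) w = 0" using w(3) sk(1) S(1) by (simp add: subspace_diff)
    ultimately show ?thesis
      using sX w(1) square_add[of "s m - s n" "(k m - k n) *\<^sub>R w"] square_scaleR[of w "k m - k n"]
      by (simp add: scaleR_right)
  qed
  have s_le: "sqrt (b (s m - s n) (s m - s n)) \<le> sqrt (b (x m - x n) (x m - x n))" for m n
    using Pythagoras[of m n] w(2) by simp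
  have "\<exists>N. \<forall>m\<ge>N. \<forall>n\<ge>N. sqrt (b (s m - s n) (s m - s n)) < e" if "e > 0" for e
    using Cauchy that s_le by (meson le_less_trans)
  then obtain t where t: "t \<in> S" "(\<lambda>n. sqrt (b (s n - t) (s n - t))) \<longlonglongrightarrow> 0"
    using complete_wrtD[OF S(3), of s, OF sk(1)] by blast
  have k_bound: "\<bar>k m - k n\<bar> * sqrt (b w w) \<le> sqrt (b (x m - x n) (x m - x n))" for m n
  proof -
    have "\<bar>k m - k n\<bar> * sqrt (b w w) = sqrt ((k m - k n)\<^sup>2 * b w w)" by (simp add: real_sqrt_mult)
    also have "\<dots> \<le> sqrt (b (x m - x n) (x m - x n))"
      using Pythagoras[of m n] nonneg[of "s m - s n"] sX by simp
    finally show ?thesis .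
  qed
  have "Cauchy k"
  proof (rule CauchyI)
    fix e :: real assume e: "0 < e"
    obtain N where N: "\<forall>m\<ge>N. \<forall>n\<ge>N. sqrt (b (x m - x n) (x m - x n)) < e * sqrt (b w w)"
      using Cauchy e w(2) by (meson mult_pos_pos real_sqrt_gt_zero)
    have "norm (k m - k n) < e" if "m \<ge> N" "n \<ge> N" for m n
    proof -
      have "\<bar>k m - k n\<bar> * sqrt (b w w) < e * sqrt (b w w)"
        using k_bound[of m n] N that by (meson le_less_trans)
      then show ?thesis using w(2) by simp
    qed
    then show "\<exists>M. \<forall>m\<ge>M. \<forall>n\<ge>M. norm (k m - k n) < e" by blast
  qed
  then obtain l where l: "k \<longlonglongrightarrow> l" using Cauchy_convergent_iff convergent_def by blast
  have tX: "t \<in> X" using t S by auto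
  have "(\<lambda>n. sqrt (b (x n - (t + l *\<^sub>R w)) (x n - (t + l *\<^sub>R w)))) \<longlonglongrightarrow> 0"
  proof (rule Lim_null_comparison)
    have "sqrt (b (x n - (t + l *\<^sub>R w)) (x n - (t + l *\<^sub>R w)))
        \<le> sqrt (b (s n - t) (s n - t)) + \<bar>k n - l\<bar> * sqrt (b w w)" for n
    proof -
      have "sqrt (b ((s n - t) + (k n - l) *\<^sub>R w) ((s n - t) + (k n - l) *\<^sub>R w))
          \<le> sqrt (b (s n - t) (s n - t)) + \<bar>k n - l\<bar> * sqrt (b w w)"
        using triangle[of "s n - t" "(k n - l) *\<^sub>R w"] sX tX w(1)
        by (simp add: square_scaleR real_sqrt_mult)
      moreover have "x n - (t + l *\<^sub>R w) = (s n - t) + (k n - l) *\<^sub>R w"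
        using sk(2) by (simp add: algebra_simps)
      ultimately show ?thesis by (simp only:)
    qed
    then show "\<forall>\<^sub>F n in sequentially. norm (sqrt (b (x n - (t + l *\<^sub>R w)) (x n - (t + l *\<^sub>R w))))
        \<le> sqrt (b (s n - t) (s n - t)) + \<bar>k n - l\<bar> * sqrt (b w w)"
      using sk(2) sX tX w(1) nonneg[of "x _ - (t + l *\<^sub>R w)"] by (simp add: always_eventually)
    have "(\<lambda>n. \<bar>k n - l\<bar>) \<longlonglongrightarrow> 0" using l by (simp add: LIM_zero tendsto_rabs_zero)
    then show "(\<lambda>n. sqrt (b (s n - t) (s n - t)) + \<bar>k n - l\<bar> * sqrt (b w w)) \<longlonglongrightarrow> 0"
      using t(2) tendsto_add_zero tendsto_mult_left_zero by blast
  qed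
  then show "\<exists>y\<in>{s + k *\<^sub>R w | s k. s \<in> S}. (\<lambda>n. sqrt (b (x n - y) (x n - y))) \<longlonglongrightarrow> 0"
    using t(1) by blast
qed

end

locale inner_form = psd_form +
  assumes pos: "\<And>u. u \<in> X \<Longrightarrow> u \<noteq> 0 \<Longrightarrow> b u u > 0"
begin

lemma square_eq_0_iff: "u \<in> X \<Longrightarrow> b u u = 0 \<longleftrightarrow> u = 0"
  using pos by force

lemma eq_if_same_form:
  assumes "g \<in> X" "h \<in> X" "\<And>v. v \<in> X \<Longrightarrow> b g v = b h v" shows "g = h"
  using assms diff_left[of g h "g - h"] square_eq_0_iff[of "g - h"] by simp

lemma Riesz_representation:
  assumes C: "complete_wrt X b" and f: "bounded_functional_on X b f"
  shows "\<exists>g\<in>X. \<forall>v\<in>X. f v = b g v"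
proof (cases "\<forall>v\<in>X. f v = 0")
  case True
  then show ?thesis by (intro bexI[of _ 0]) simp_all
next
  case False
  have add: "\<And>v w. v \<in> X \<Longrightarrow> w \<in> X \<Longrightarrow> f (v + w) = f v + f w"
    and hom: "\<And>c v. v \<in> X \<Longrightarrow> f (c *\<^sub>R v) = c * f v"
    using f unfolding bounded_functional_on_def by blast+
  have diff: "f (v - w) = f v - f w" if "v \<in> X" "w \<in> X" for v w
    using add[of "v - w" w] that by simp
  define N where "N = {v \<in> X. f v = 0}"
  have N: "subspace N" "N \<subseteq> X"
    unfolding subspace_def N_def using add hom[of 0 0] hom by auto
  obtain z where z: "z \<in> X" "f z \<noteq> 0" using False by blast
  \<comment> \<open>The component of z orthogonal to the kernel spans the representer.\<close>
  obtain p where p: "p \<in> N" "\<forall>s\<in>N. b (z - p) s = 0"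
    using orthogonal_projection_exists[OF N complete_wrt_kernel[OF C f, folded N_def] z(1)] by blast
  define w where "w = z - p"
  have wX: "w \<in> X" using w_def z(1) p N by auto
  have fw: "f w = f z" unfolding w_def using diff[of z p] z(1) p(1) N_def by simp
  have "w \<noteq> 0" using fw z(2) hom[of 0 0] by auto
  then have bw: "b w w > 0" using pos[OF wX] by blast
  have "f v = b ((f w / b w w) *\<^sub>R w) v" if v: "v \<in> X" for v
  proof -
    have "f (f v *\<^sub>R w - f w *\<^sub>R v) = 0" using diff hom v wX by simp
    then have "f v *\<^sub>R w - f w *\<^sub>R v \<in> N" using v wX N_def by simp
    then have "0 = b w (f v *\<^sub>R w - f w *\<^sub>R v)" using p(2) w_def by simp
    also have "\<dots> = f v * b w w - f w * b w v" using v wX by (simp add: diff_right scaleR_right)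
    finally show ?thesis using bw v wX by (simp add: scaleR_left field_simps)
  qed
  moreover have "(f w / b w w) *\<^sub>R w \<in> X" using wX by simp
  ultimately show ?thesis by blast
qed

end

lemma subspace_image_additive:
  assumes X: "subspace X"
    and add: "\<And>u w. u \<in> X \<Longrightarrow> w \<in> X \<Longrightarrow> T (u + w) = T u + T w"
    and scaleR: "\<And>c u. u \<in> X \<Longrightarrow> T (c *\<^sub>R u) = c *\<^sub>R T u"
  shows "subspace (T ` X)"
  unfolding subspace_def
proof (intro conjI ballI allI)
  show "0 \<in> T ` X" using scaleR[of 0 0] X subspace_0 by (metis image_eqI scaleR_zero_left)
  fix x y assume "x \<in> T ` X" "y \<in> T ` X"
  then obtain u w where "u \<in> X" "w \<in> X" "x = T u" "y = T w" by blast
  then show "x + y \<in> T ` X" using add X by (metis image_eqI subspace_add)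
next
  fix c x assume "x \<in> T ` X"
  then obtain u where "u \<in> X" "x = T u" by blast
  then show "c *\<^sub>R x \<in> T ` X" using scaleR X by (metis image_eqI subspace_scale)
qed

context inner_form
begin

lemma Lax_Milgram:
  assumes C: "complete_wrt X b"
    and a_add_left: "\<And>u v w. u \<in> X \<Longrightarrow> v \<in> X \<Longrightarrow> w \<in> X \<Longrightarrow> a (u + v) w = a u w + a v w"
    and a_scaleR_left: "\<And>c u w. u \<in> X \<Longrightarrow> w \<in> X \<Longrightarrow> a (c *\<^sub>R u) w = c * a u w"
    and a_add_right: "\<And>u v w. u \<in> X \<Longrightarrow> v \<in> X \<Longrightarrow> w \<in> X \<Longrightarrow> a w (u + v) = a w u + a w v"
    and a_scaleR_right: "\<And>c u w. u \<in> X \<Longrightarrow> w \<in> X \<Longrightarrow> a w (c *\<^sub>R u) = c * a w u"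
    and bounded: "\<And>u v. u \<in> X \<Longrightarrow> v \<in> X \<Longrightarrow> \<bar>a u v\<bar> \<le> M * sqrt (b u u) * sqrt (b v v)"
    and M: "M \<ge> 0"
    and coercive: "\<And>u. u \<in> X \<Longrightarrow> \<alpha> * b u u \<le> a u u" and \<alpha>: "\<alpha> > 0"
    and f: "bounded_functional_on X b f"
  shows "\<exists>u\<in>X. \<forall>v\<in>X. a u v = f v"
proof -
  \<comment> \<open>T u is the Riesz representer of a u; its range is closed and has trivial orthogonal
    complement, so it contains the representer of f.\<close>
  have "\<exists>g\<in>X. \<forall>v\<in>X. a u v = b g v" if u: "u \<in> X" for u
    using Riesz_representation[OF C, of "a u"] u a_add_right a_scaleR_right bounded
    unfolding bounded_functional_on_def by fastforce
  then obtain T where T: "\<And>u. u \<in> X \<Longrightarrow> T u \<in> X" "\<And>u v. u \<in> X \<Longrightarrow> v \<in> X \<Longrightarrow> a u v = b (T u) v"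
    by metis
  have T_add: "T (u + w) = T u + T w" if "u \<in> X" "w \<in> X" for u w
    using that T a_add_left by (intro eq_if_same_form) (simp_all add: add_left)
  have T_scaleR: "T (c *\<^sub>R u) = c *\<^sub>R T u" if "u \<in> X" for u c
    using that T a_scaleR_left by (intro eq_if_same_form) (simp_all add: scaleR_left)
  have T_diff: "T (u - w) = T u - T w" if "u \<in> X" "w \<in> X" for u w
    using T_add[of "u - w" w] that by simp
  have lower: "\<alpha> * sqrt (b u u) \<le> sqrt (b (T u) (T u))" if u: "u \<in> X" for u
  proof (cases "b u u = 0")
    case False
    then have pos_u: "sqrt (b u u) > 0" using nonneg u by (simp add: order_less_le)
    have "(\<alpha> * sqrt (b u u)) * sqrt (b u u) = \<alpha> * b u u" using nonneg u by (simp add: mult.assoc)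
    also have "\<dots> \<le> b (T u) u" using coercive T u by simp
    also have "\<dots> \<le> sqrt (b (T u) (T u)) * sqrt (b u u)" using Cauchy_Schwarz_abs T u by fastforce
    finally show ?thesis using pos_u by simp
  qed (use nonneg T u in simp)
  have upper: "sqrt (b (T u) (T u)) \<le> M * sqrt (b u u)" if u: "u \<in> X" for u
  proof (cases "b (T u) (T u) = 0")
    case False
    then have pos_Tu: "sqrt (b (T u) (T u)) > 0" using nonneg T u by (simp add: order_less_le)
    have "sqrt (b (T u) (T u)) * sqrt (b (T u) (T u)) = a u (T u)" using nonneg T u by simp
    also have "\<dots> \<le> (M * sqrt (b u u)) * sqrt (b (T u) (T u))" using bounded T u by fastforce
    finally show ?thesis using pos_Tu by (rule mult_right_le_imp_le)
  qed (use nonneg u M in simp)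
  define R where "R = T ` X"
  have R: "subspace R" "R \<subseteq> X"
    unfolding R_def using subspace_image_additive[OF subspace T_add T_scaleR] T by blast+
  have R_complete: "complete_wrt R b"
    unfolding R_def using complete_wrt_image[OF C T(1) T_diff lower \<alpha> upper] .
  obtain g where g: "g \<in> X" "\<And>v. v \<in> X \<Longrightarrow> f v = b g v"
    using Riesz_representation[OF C f] by blast
  obtain q where q: "q \<in> R" "\<forall>s\<in>R. b (g - q) s = 0"
    using orthogonal_projection_exists[OF R R_complete g(1)] by blast
  obtain u where u: "u \<in> X" "q = T u" using q R_def by auto
  have gqX: "g - q \<in> X" using g q R by auto
  have "0 = b (g - q) (T (g - q))" using q gqX R_def by simp
  also have "\<dots> = a (g - q) (g - q)" using T gqX sym by simp
  finally have "\<alpha> * b (g - q) (g - q) \<le> 0" using coercive[OF gqX] by simp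
  then have "g = q" using \<alpha> nonneg[OF gqX] square_eq_0_iff[OF gqX] by (simp add: mult_le_0_iff)
  then show ?thesis using u T g by auto
qed

lemma complete_span:
  assumes "finite B" "B \<subseteq> X" shows "complete_wrt (span B) b"
  using assms
proof (induction B rule: finite_induct)
  case empty
  show ?case unfolding complete_wrt_def by (intro allI impI bexI[of _ 0]) auto
next
  case (insert c B)
  have IH: "complete_wrt (span B) b" and cX: "c \<in> X" using insert by auto
  have BX: "span B \<subseteq> X" using insert.prems subspace by (intro span_minimal) auto
  obtain p where p: "p \<in> span B" "\<forall>s\<in>span B. b (c - p) s = 0"
    using orthogonal_projection_exists[OF subspace_span BX IH cX] by blast
  show ?case
  proof (cases "c - p = 0")
    case True
    then have "c \<in> span B" using p by simp
    then show ?thesis using IH span_redundant by metis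
  next
    case False
    have cpX: "c - p \<in> X" using p BX cX by auto
    have orth: "b s (c - p) = 0" if "s \<in> span B" for s
      using p(2) that BX sym[of s "c - p"] cpX by auto
    note w = cpX pos[OF cpX False] orth
    have "span (insert c B) = {s + k *\<^sub>R (c - p) | s k. s \<in> span B}"
    proof (intro set_eqI iffI)
      fix x assume "x \<in> span (insert c B)"
      then obtain k where k: "x - k *\<^sub>R c \<in> span B" unfolding span_insert by blast
      have "(x - k *\<^sub>R c) + k *\<^sub>R p \<in> span B" using k p(1) by (simp add: span_add span_scale)
      moreover have "x = ((x - k *\<^sub>R c) + k *\<^sub>R p) + k *\<^sub>R (c - p)" by (simp add: algebra_simps)
      ultimately show "x \<in> {s + k *\<^sub>R (c - p) | s k. s \<in> span B}" by blast
    next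
      fix x assume "x \<in> {s + k *\<^sub>R (c - p) | s k. s \<in> span B}"
      then obtain s k where sk: "s \<in> span B" "x = s + k *\<^sub>R (c - p)" by blast
      then have "x - k *\<^sub>R c = s - k *\<^sub>R p" by (simp add: algebra_simps)
      then have "x - k *\<^sub>R c \<in> span B" using sk(1) p(1) by (simp add: span_diff span_scale)
      then show "x \<in> span (insert c B)" unfolding span_insert by blast
    qed
    then show ?thesis using complete_wrt_orthogonal_line[OF subspace_span BX IH w] by simp
  qed
qed

end

section \<open>Finite products of form spaces\<close>

definition vec_carrier :: "'v::real_vector set \<Rightarrow> ('v^'n) set" where
  "vec_carrier W = {x. \<forall>i. x$i \<in> W}"

definition vec_form :: "('v::real_vector \<Rightarrow> 'v \<Rightarrow> real) \<Rightarrow> 'v^'n \<Rightarrow> 'v^'n \<Rightarrow> real" where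
  "vec_form Q x y = (\<Sum>i\<in>UNIV. Q (x$i) (y$i))"

lemma psd_form_vec:
  assumes "psd_form W Q" shows "psd_form (vec_carrier W :: ('v::real_vector^'n) set) (vec_form Q)"
proof -
  interpret psd_form W Q by fact
  show ?thesis
  proof
    show "subspace (vec_carrier W :: ('v^'n) set)"
      unfolding subspace_def vec_carrier_def by simp
    show "sym_bilinear_on (vec_carrier W :: ('v^'n) set) (vec_form Q)"
      unfolding sym_bilinear_on_def vec_carrier_def vec_form_def
      using sym add_left scaleR_left by (simp add: sum.distrib sum_distrib_left)
    show "\<And>u. u \<in> (vec_carrier W :: ('v^'n) set) \<Longrightarrow> 0 \<le> vec_form Q u u"
      unfolding vec_carrier_def vec_form_def using nonneg by (simp add: sum_nonneg)
  qed
qed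

lemma inner_form_vec:
  assumes "inner_form W Q" shows "inner_form (vec_carrier W :: ('v::real_vector^'n) set) (vec_form Q)"
proof -
  interpret inner_form W Q by fact
  interpret V: psd_form "vec_carrier W :: ('v^'n) set" "vec_form Q"
    by (rule psd_form_vec[OF psd_form_axioms])
  show ?thesis
  proof
    fix u :: "'v^'n" assume u: "u \<in> vec_carrier W" "u \<noteq> 0"
    then obtain i where i: "u$i \<noteq> 0" by (metis vec_eq_iff zero_index)
    have uW: "u$j \<in> W" for j using u vec_carrier_def by auto
    have "0 < Q (u$i) (u$i)" using pos uW i by blast
    also have "\<dots> \<le> (\<Sum>j\<in>UNIV. Q (u$j) (u$j))"
      by (intro member_le_sum) (simp_all add: nonneg uW)
    finally show "0 < vec_form Q u u" unfolding vec_form_def .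
  qed
qed

lemma complete_wrt_vec:
  assumes "psd_form W Q" "complete_wrt W Q"
  shows "complete_wrt (vec_carrier W :: ('v::real_vector^'n) set) (vec_form Q)"
  unfolding complete_wrt_def
proof (intro allI impI)
  interpret psd_form W Q by fact
  fix x :: "nat \<Rightarrow> 'v^'n" assume "\<forall>n. x n \<in> vec_carrier W"
    and Cauchy: "\<forall>e>0. \<exists>N. \<forall>m\<ge>N. \<forall>n\<ge>N. sqrt (vec_form Q (x m - x n) (x m - x n)) < e"
  then have xW: "x n $ i \<in> W" for n i by (simp add: vec_carrier_def)
  have component_le: "sqrt (Q (x m $ i - x n $ i) (x m $ i - x n $ i))
      \<le> sqrt (vec_form Q (x m - x n) (x m - x n))" for m n i
    unfolding vec_form_def by (simp, intro member_le_sum) (simp_all add: nonneg xW)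
  have "\<exists>y\<in>W. (\<lambda>n. sqrt (Q (x n $ i - y) (x n $ i - y))) \<longlonglongrightarrow> 0" for i
  proof -
    have "\<exists>N. \<forall>m\<ge>N. \<forall>n\<ge>N. sqrt (Q (x m $ i - x n $ i) (x m $ i - x n $ i)) < e" if "e > 0" for e
      using Cauchy that component_le by (meson le_less_trans)
    then show ?thesis using complete_wrtD[OF assms(2), of "\<lambda>n. x n $ i", OF xW] by blast
  qed
  then have "\<exists>y. \<forall>i. y i \<in> W \<and> (\<lambda>n. sqrt (Q (x n $ i - y i) (x n $ i - y i))) \<longlonglongrightarrow> 0"
    by (intro choice) blast
  then obtain y where y: "\<And>i. y i \<in> W" "\<And>i. (\<lambda>n. sqrt (Q (x n $ i - y i) (x n $ i - y i))) \<longlonglongrightarrow> 0"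
    by blast
  have sum_eq: "(\<Sum>i\<in>UNIV. (sqrt (Q (x n $ i - y i) (x n $ i - y i)))\<^sup>2)
      = vec_form Q (x n - (\<chi> i. y i)) (x n - (\<chi> i. y i))" for n
    unfolding vec_form_def by (simp add: nonneg xW y)
  have "(\<lambda>n. \<Sum>i\<in>UNIV. (sqrt (Q (x n $ i - y i) (x n $ i - y i)))\<^sup>2) \<longlonglongrightarrow> (\<Sum>i\<in>(UNIV::'n set). 0\<^sup>2)"
    by (intro tendsto_intros y(2))
  then have "(\<lambda>n. vec_form Q (x n - (\<chi> i. y i)) (x n - (\<chi> i. y i))) \<longlonglongrightarrow> 0"
    unfolding sum_eq by simp
  from tendsto_real_sqrt[OF this]
  have "(\<lambda>n. sqrt (vec_form Q (x n - (\<chi> i. y i)) (x n - (\<chi> i. y i)))) \<longlonglongrightarrow> 0" by simp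
  moreover have "(\<chi> i. y i) \<in> vec_carrier W" unfolding vec_carrier_def using y by simp
  ultimately show "\<exists>y\<in>vec_carrier W. (\<lambda>n. sqrt (vec_form Q (x n - y) (x n - y))) \<longlonglongrightarrow> 0"
    by blast
qed

lemma complete_wrt_equivalent:
  assumes V: "subspace V" and q1: "\<And>x. x \<in> V \<Longrightarrow> 0 \<le> q1 x x"
    and lower: "\<And>x. x \<in> V \<Longrightarrow> m * q1 x x \<le> q2 x x" and upper: "\<And>x. x \<in> V \<Longrightarrow> q2 x x \<le> K * q1 x x"
    and m: "m > 0" and C: "complete_wrt V q1"
  shows "complete_wrt V q2"
  unfolding complete_wrt_def
proof (intro allI impI)
  fix x :: "nat \<Rightarrow> 'a" assume xV: "\<forall>n. x n \<in> V"
    and Cauchy: "\<forall>e>0. \<exists>N. \<forall>m\<ge>N. \<forall>n\<ge>N. sqrt (q2 (x m - x n) (x m - x n)) < e"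
  have dV: "x a - x c \<in> V" for a c using xV V by (simp add: subspace_diff)
  have q1_le: "sqrt m * sqrt (q1 (x a - x c) (x a - x c)) \<le> sqrt (q2 (x a - x c) (x a - x c))" for a c
    using lower[OF dV] by (simp flip: real_sqrt_mult)
  have "\<exists>N. \<forall>a\<ge>N. \<forall>c\<ge>N. sqrt (q1 (x a - x c) (x a - x c)) < e" if e: "e > 0" for e
  proof -
    obtain N where N: "\<forall>a\<ge>N. \<forall>c\<ge>N. sqrt (q2 (x a - x c) (x a - x c)) < sqrt m * e"
      using Cauchy e m by (meson mult_pos_pos real_sqrt_gt_zero)
    have "sqrt (q1 (x a - x c) (x a - x c)) < e" if "a \<ge> N" "c \<ge> N" for a c
      using q1_le[of a c] N that m by (smt (verit) mult_left_less_imp_less real_sqrt_gt_zero)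
    then show ?thesis by blast
  qed
  then obtain y where y: "y \<in> V" "(\<lambda>n. sqrt (q1 (x n - y) (x n - y))) \<longlonglongrightarrow> 0"
    using C[unfolded complete_wrt_def, rule_format, of x] xV by blast
  have yV: "x n - y \<in> V" for n using xV y V by (simp add: subspace_diff)
  have "(\<lambda>n. sqrt (q2 (x n - y) (x n - y))) \<longlonglongrightarrow> 0"
  proof (rule Lim_null_comparison)
    have "norm (sqrt (q2 (x n - y) (x n - y))) \<le> sqrt K * sqrt (q1 (x n - y) (x n - y))" for n
    proof -
      have "0 \<le> q2 (x n - y) (x n - y)"
        using q1[OF yV] lower[OF yV] m by (meson mult_nonneg_nonneg order_trans less_imp_le)
      then show ?thesis using upper[OF yV] by (simp flip: real_sqrt_mult)
    qed
    then show "\<forall>\<^sub>F n in sequentially. norm (sqrt (q2 (x n - y) (x n - y)))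
        \<le> sqrt K * sqrt (q1 (x n - y) (x n - y))" by simp
    show "(\<lambda>n. sqrt K * sqrt (q1 (x n - y) (x n - y))) \<longlonglongrightarrow> 0"
      using tendsto_mult_right_zero[OF y(2)] by simp
  qed
  then show "\<exists>y\<in>V. (\<lambda>n. sqrt (q2 (x n - y) (x n - y))) \<longlonglongrightarrow> 0" using y by blast
qed

section \<open>Matrices\<close>

lemma pos_def_lower_bound:
  fixes M :: "real^'n^'n"
  assumes pd: "\<And>x. x \<noteq> 0 \<Longrightarrow> x \<bullet> (M *v x) > 0"
  shows "\<exists>\<beta>>0. \<forall>x. \<beta> * (x \<bullet> x) \<le> x \<bullet> (M *v x)"
proof -
  define q where "q = (\<lambda>x::real^'n. x \<bullet> (M *v x))"
  have cont: "continuous_on (sphere 0 1) q" unfolding q_def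
    by (intro continuous_intros linear_continuous_on matrix_vector_mul_bounded_linear)
  obtain i :: 'n where True by blast
  have "(axis i 1 :: real^'n) \<in> sphere 0 1" by (simp add: norm_axis_1)
  then have ne: "sphere (0::real^'n) 1 \<noteq> {}" by blast
  obtain x0 where x0: "x0 \<in> sphere 0 1" "\<forall>y\<in>sphere 0 1. q x0 \<le> q y"
    using continuous_attains_inf[OF compact_sphere ne cont] by blast
  have "x0 \<noteq> 0" using x0(1) by auto
  then have "q x0 > 0" using pd unfolding q_def by blast
  moreover have "q x0 * (x \<bullet> x) \<le> x \<bullet> (M *v x)" for x
  proof (cases "x = 0")
    case False
    have "(1 / norm x) *\<^sub>R x \<in> sphere 0 1" using False by simp
    then have "q x0 \<le> q ((1 / norm x) *\<^sub>R x)" using x0(2) by blast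
    also have "\<dots> = (1 / norm x)\<^sup>2 * (x \<bullet> (M *v x))"
      unfolding q_def by (simp add: matrix_vector_mult_scaleR power2_eq_square)
    finally have "q x0 \<le> (1 / norm x)\<^sup>2 * (x \<bullet> (M *v x))" .
    then show ?thesis using False by (simp add: field_simps power2_norm_eq_inner)
  qed simp
  ultimately show ?thesis by blast
qed

lemma pos_def_invertible:
  fixes C :: "real^'n^'n"
  assumes pd: "\<And>x. x \<noteq> 0 \<Longrightarrow> x \<bullet> (C *v x) > 0"
  shows "invertible C"
proof -
  have "inj ((*v) C)"
  proof (rule injI)
    fix x y assume "C *v x = C *v y"
    then have "(x - y) \<bullet> (C *v (x - y)) = 0" by (simp add: matrix_vector_mult_diff_distrib)
    then show "x = y" using pd[of "x - y"] by auto
  qed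
  then show ?thesis unfolding invertible_left_inverse matrix_left_invertible_injective .
qed

definition wpd_witness :: "real^'n^'n \<Rightarrow> real^'n^'n \<Rightarrow> real \<Rightarrow> bool" where
  "wpd_witness M C \<alpha> \<longleftrightarrow> transpose C = C \<and> invertible C \<and> \<alpha> > 0
     \<and> (\<forall>x. \<alpha> * (x \<bullet> x) \<le> x \<bullet> (C *v x)) \<and> (\<forall>x. \<alpha> * (x \<bullet> x) \<le> x \<bullet> ((C ** M) *v x))"

lemma weakly_pos_def_witness:
  fixes M :: "real^'n^'n" assumes "weakly_pos_def M" shows "\<exists>C \<alpha>. wpd_witness M C \<alpha>"
proof -
  obtain C where C: "transpose C = C" "\<And>x. x \<noteq> 0 \<Longrightarrow> x \<bullet> (C *v x) > 0"
    "\<And>x. x \<noteq> 0 \<Longrightarrow> x \<bullet> ((C ** M) *v x) > 0"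
    using assms unfolding weakly_pos_def_def by blast
  obtain a1 where a1: "a1 > 0" "\<forall>x. a1 * (x \<bullet> x) \<le> x \<bullet> (C *v x)"
    using pos_def_lower_bound[OF C(2)] by blast
  obtain a2 where a2: "a2 > 0" "\<forall>x. a2 * (x \<bullet> x) \<le> x \<bullet> ((C ** M) *v x)"
    using pos_def_lower_bound[OF C(3)] by blast
  have "min a1 a2 * (x \<bullet> x) \<le> a1 * (x \<bullet> x)" "min a1 a2 * (x \<bullet> x) \<le> a2 * (x \<bullet> x)"
    for x :: "real^'n" by (simp_all add: mult_right_mono)
  then have "wpd_witness M C (min a1 a2)"
    unfolding wpd_witness_def using C(1) pos_def_invertible[OF C(2)] a1 a2 by (meson min_less_iff_conj order_trans)
  then show ?thesis by blast
qed

lemma nonneg_quadratic_form_remove: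
  fixes S :: "'i \<Rightarrow> 'i \<Rightarrow> real"
  assumes "finite I" "\<forall>x. 0 \<le> (\<Sum>i\<in>insert j I. \<Sum>k\<in>insert j I. S i k * x i * x k)"
  shows "\<forall>x. 0 \<le> (\<Sum>i\<in>I. \<Sum>k\<in>I. S i k * x i * x k)"
proof
  fix x
  show "0 \<le> (\<Sum>i\<in>I. \<Sum>k\<in>I. S i k * x i * x k)"
  proof (cases "j \<in> I")
    case False
    define y where "y = x(j := 0)"
    have y: "y j = 0" "\<And>i. i \<in> I \<Longrightarrow> y i = x i" using False unfolding y_def by auto
    have "0 \<le> (\<Sum>i\<in>insert j I. \<Sum>k\<in>insert j I. S i k * y i * y k)"
      using assms(2) by blast
    also have "\<dots> = (\<Sum>i\<in>I. \<Sum>k\<in>I. S i k * y i * y k)"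
      using assms(1) False y(1) by simp
    also have "\<dots> = (\<Sum>i\<in>I. \<Sum>k\<in>I. S i k * x i * x k)"
      using y(2) by simp
    finally show ?thesis .
  qed (use assms(2) insert_absorb in metis)
qed

context psd_form
begin

text \<open>The induction step removes the component of every u i along u j, which splits off a
  nonnegative multiple of the quadratic form of S.\<close>
lemma psd_matrix_Gram_nonneg:
  assumes "finite I" "\<forall>x. 0 \<le> (\<Sum>i\<in>I. \<Sum>k\<in>I. S i k * x i * x k)" "\<And>i. u i \<in> X"
  shows "0 \<le> (\<Sum>i\<in>I. \<Sum>k\<in>I. S i k * b (u i) (u k))"
  using assms
proof (induction I arbitrary: u rule: finite_induct)
  case (insert j I)
  define q where "q = b (u j) (u j)"
  have q0: "q \<ge> 0" unfolding q_def using nonneg insert.prems by simp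
  define t where "t = (\<lambda>i. if q = 0 then 0 else b (u i) (u j) / q)"
  define v where "v = (\<lambda>i. u i - t i *\<^sub>R u j)"
  have vX: "\<And>i. v i \<in> X" unfolding v_def using insert.prems by simp
  have Gram: "b (u i) (u k) = b (v i) (v k) + t i * t k * q" for i k
  proof (cases "q = 0")
    case False
    have "b (u i) (u j) = t i * q" "b (u j) (u k) = t k * q"
      unfolding t_def using False sym insert.prems by auto
    then show ?thesis
      unfolding v_def q_def using insert.prems
      by (simp add: diff_left diff_right scaleR_left scaleR_right algebra_simps)
  qed (simp add: v_def t_def)
  have v_j: "b (v j) (v k) = 0 \<and> b (v k) (v j) = 0" for k
  proof (cases "q = 0")
    case True
    then have "b (u j) w = 0" if "w \<in> X" for w
      using Cauchy_Schwarz_abs[OF insert.prems(2)[of j] that] unfolding q_def by simp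
    moreover have "v i = u i" for i unfolding v_def t_def using True by simp
    ultimately show ?thesis using insert.prems(2) sym by metis
  next
    case False
    then have "v j = 0" unfolding v_def t_def q_def by simp
    then show ?thesis using vX by simp
  qed
  have "(\<Sum>i\<in>insert j I. \<Sum>k\<in>insert j I. S i k * b (u i) (u k))
      = (\<Sum>i\<in>insert j I. \<Sum>k\<in>insert j I. S i k * b (v i) (v k))
        + q * (\<Sum>i\<in>insert j I. \<Sum>k\<in>insert j I. S i k * t i * t k)"
    unfolding Gram by (simp add: algebra_simps sum.distrib sum_distrib_left)
  also have "(\<Sum>i\<in>insert j I. \<Sum>k\<in>insert j I. S i k * b (v i) (v k))
      = (\<Sum>i\<in>I. \<Sum>k\<in>I. S i k * b (v i) (v k))"
    using insert.hyps v_j by simp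
  finally show ?case
    using insert.IH[OF nonneg_quadratic_form_remove[OF insert.hyps(1) insert.prems(1)] vX]
      q0 insert.prems(1) by simp
qed simp

lemma matrix_Gram_lower_bound:
  fixes M :: "real^'n^'n"
  assumes lower: "\<And>x. \<beta> * (x \<bullet> x) \<le> x \<bullet> (M *v x)" and uX: "\<And>i. u i \<in> X"
  shows "\<beta> * (\<Sum>i\<in>UNIV. b (u i) (u i)) \<le> (\<Sum>i\<in>UNIV. \<Sum>k\<in>UNIV. M$i$k * b (u i) (u k))"
proof -
  define S where "S = (\<lambda>i k. M$i$k - (if i = k then \<beta> else 0))"
  have shift: "(\<Sum>i\<in>UNIV. \<Sum>k\<in>UNIV. S i k * g i k)
      = (\<Sum>i\<in>UNIV. \<Sum>k\<in>UNIV. M$i$k * g i k) - \<beta> * (\<Sum>i\<in>UNIV. g i i)" for g :: "'n \<Rightarrow> 'n \<Rightarrow> real"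
  proof -
    have "(\<Sum>k\<in>UNIV. (if i = k then \<beta> else 0) * g i k) = \<beta> * g i i" for i
      by (simp add: if_distrib if_distribR cong: if_cong)
    then show ?thesis
      unfolding S_def by (simp add: left_diff_distrib sum_subtractf sum_distrib_left)
  qed
  have quadratic: "x \<bullet> (M *v x) = (\<Sum>i\<in>UNIV. \<Sum>k\<in>UNIV. M$i$k * x$i * x$k)" for x :: "real^'n"
    by (simp add: inner_vec_def matrix_vector_mult_def sum_distrib_left mult_ac)
  have "0 \<le> (\<Sum>i\<in>UNIV. \<Sum>k\<in>UNIV. S i k * f i * f k)" for f :: "'n \<Rightarrow> real"
  proof -
    have "\<beta> * (\<Sum>i\<in>UNIV. f i * f i) \<le> (\<Sum>i\<in>UNIV. \<Sum>k\<in>UNIV. M$i$k * f i * f k)"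
      using lower[of "\<chi> i. f i"] unfolding quadratic by (simp add: inner_vec_def)
    then show ?thesis using shift[of "\<lambda>i k. f i * f k"] by (simp add: mult.assoc)
  qed
  then have "0 \<le> (\<Sum>i\<in>UNIV. \<Sum>k\<in>UNIV. S i k * b (u i) (u k))"
    using uX by (intro psd_matrix_Gram_nonneg) auto
  then show ?thesis unfolding shift by simp
qed

end

definition mat_act :: "real^'n^'n \<Rightarrow> ('n::finite \<Rightarrow> 'v::real_vector) \<Rightarrow> 'n \<Rightarrow> 'v" where
  "mat_act C u = (\<lambda>i. \<Sum>k\<in>UNIV. C$i$k *\<^sub>R u k)"

lemma mat_act_mult: "mat_act C (mat_act D u) = mat_act (C ** D) u"
proof
  fix i
  have "mat_act C (mat_act D u) i = (\<Sum>k\<in>UNIV. \<Sum>m\<in>UNIV. (C$i$k * D$k$m) *\<^sub>R u m)"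
    unfolding mat_act_def by (simp add: scaleR_sum_right)
  also have "\<dots> = (\<Sum>m\<in>UNIV. \<Sum>k\<in>UNIV. (C$i$k * D$k$m) *\<^sub>R u m)" by (rule sum.swap)
  also have "\<dots> = mat_act (C ** D) u i"
    unfolding mat_act_def matrix_matrix_mult_def by (simp add: scaleR_sum_left)
  finally show "mat_act C (mat_act D u) i = mat_act (C ** D) u i" .
qed

lemma mat_act_id: "mat_act (mat 1) u = u"
  unfolding mat_act_def mat_def by (simp add: if_distrib if_distribR cong: if_cong)

lemma mat_act_add: "mat_act C (\<lambda>i. u i + w i) = (\<lambda>i. mat_act C u i + mat_act C w i)"
  unfolding mat_act_def by (simp add: scaleR_add_right sum.distrib)

lemma mat_act_scaleR: "mat_act C (\<lambda>i. a *\<^sub>R u i) = (\<lambda>i. a *\<^sub>R mat_act C u i)"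
  unfolding mat_act_def by (simp add: scaleR_sum_right mult.commute)

section \<open>The stage forms\<close>

definition form_bound :: "real^'n^'n \<Rightarrow> real" where
  "form_bound M = real CARD('n) + (\<Sum>i\<in>UNIV. \<Sum>j\<in>UNIV. \<bar>M$i$j\<bar>)"

definition mat_act_bound :: "real^'n^'n \<Rightarrow> real" where
  "mat_act_bound C = (\<Sum>i\<in>UNIV. \<Sum>k\<in>UNIV. \<Sum>m\<in>UNIV. \<bar>C$i$k\<bar> * \<bar>C$i$m\<bar>)"

lemma form_bound_nonneg: "form_bound M \<ge> 0"
  unfolding form_bound_def by (simp add: sum_nonneg)

lemma mat_act_bound_nonneg: "mat_act_bound C \<ge> 0"
  unfolding mat_act_bound_def by (simp add: sum_nonneg)

locale stage_setting =
  fixes l2 h1 :: "'v::real_vector \<Rightarrow> 'v \<Rightarrow> real" and W :: "'v set" and \<mu> :: nat and ht :: real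
  assumes l2: "psd_form W l2" and h1: "psd_form W h1"
    and l2_pos: "\<And>u. u \<in> W \<Longrightarrow> u \<noteq> 0 \<Longrightarrow> l2 u u > 0"
    and ht: "ht > 0" and complete: "complete_wrt W (\<lambda>x y. l2 x y + ht ^ \<mu> * h1 x y)"
begin

sublocale L: psd_form W l2 by (rule l2)
sublocale H: psd_form W h1 by (rule h1)

lemma ht_power_pos: "ht ^ \<mu> > 0" using ht by simp

definition energy :: "'v \<Rightarrow> 'v \<Rightarrow> real" where
  "energy x y = l2 x y + ht ^ \<mu> * h1 x y"

sublocale E: inner_form W energy
proof
  show "subspace W" by (rule L.subspace)
  show "sym_bilinear_on W energy" unfolding sym_bilinear_on_def energy_def
    using L.sym H.sym L.add_left H.add_left L.scaleR_left H.scaleR_left by (simp add: algebra_simps)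
  show "\<And>u. u \<in> W \<Longrightarrow> 0 \<le> energy u u"
    unfolding energy_def using L.nonneg H.nonneg ht_power_pos by simp
  show "\<And>u. u \<in> W \<Longrightarrow> u \<noteq> 0 \<Longrightarrow> 0 < energy u u"
    unfolding energy_def using l2_pos H.nonneg ht_power_pos by (simp add: add_pos_nonneg)
qed

lemma complete_energy: "complete_wrt W energy"
  using complete unfolding energy_def[abs_def] .

definition stage_form :: "real^'n^'n \<Rightarrow> ('n::finite \<Rightarrow> 'v) \<Rightarrow> ('n \<Rightarrow> 'v) \<Rightarrow> real" where
  "stage_form M u v = (\<Sum>i\<in>UNIV. l2 (u i) (v i)) + ht ^ \<mu> * (\<Sum>i\<in>UNIV. \<Sum>j\<in>UNIV. M$i$j * h1 (u j) (v i))"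

lemma form_op_eq: "form_op l2 h1 \<mu> ht M W u = (\<lambda>v. if v \<in> vecs W then stage_form M u v else 0)"
  unfolding form_op_def stage_form_def by simp

lemma normV_eq: "normV l2 h1 \<mu> ht u = sqrt (\<Sum>i\<in>UNIV. energy (u i) (u i))"
  unfolding normV_def energy_def by simp

lemma vecsD: "u \<in> vecs W \<Longrightarrow> u i \<in> W"
  unfolding vecs_def by simp

lemma vecs_closed:
  "u \<in> vecs W \<Longrightarrow> w \<in> vecs W \<Longrightarrow> (\<lambda>i. u i + w i) \<in> vecs W"
  "u \<in> vecs W \<Longrightarrow> (\<lambda>i. a *\<^sub>R u i) \<in> vecs W"
  "u \<in> vecs W \<Longrightarrow> w \<in> vecs W \<Longrightarrow> (\<lambda>i. u i - w i) \<in> vecs W"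
  unfolding vecs_def by simp_all

lemma stage_form_add_left:
  "u \<in> vecs W \<Longrightarrow> w \<in> vecs W \<Longrightarrow> v \<in> vecs W \<Longrightarrow>
   stage_form M (\<lambda>i. u i + w i) v = stage_form M u v + stage_form M w v"
  unfolding stage_form_def by (simp add: vecsD L.add_left H.add_left sum.distrib algebra_simps)

lemma stage_form_scaleR_left:
  "u \<in> vecs W \<Longrightarrow> v \<in> vecs W \<Longrightarrow> stage_form M (\<lambda>i. a *\<^sub>R u i) v = a * stage_form M u v"
  unfolding stage_form_def by (simp add: vecsD L.scaleR_left H.scaleR_left sum_distrib_left algebra_simps)

lemma stage_form_add_right:
  "u \<in> vecs W \<Longrightarrow> w \<in> vecs W \<Longrightarrow> v \<in> vecs W \<Longrightarrow>
   stage_form M v (\<lambda>i. u i + w i) = stage_form M v u + stage_form M v w"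
  unfolding stage_form_def by (simp add: vecsD L.add_right H.add_right sum.distrib algebra_simps)

lemma stage_form_scaleR_right:
  "u \<in> vecs W \<Longrightarrow> v \<in> vecs W \<Longrightarrow> stage_form M v (\<lambda>i. a *\<^sub>R u i) = a * stage_form M v u"
  unfolding stage_form_def by (simp add: vecsD L.scaleR_right H.scaleR_right sum_distrib_left algebra_simps)

lemma stage_form_diff_left:
  "u \<in> vecs W \<Longrightarrow> w \<in> vecs W \<Longrightarrow> v \<in> vecs W \<Longrightarrow>
   stage_form M (\<lambda>i. u i - w i) v = stage_form M u v - stage_form M w v"
  unfolding stage_form_def by (simp add: vecsD L.diff_left H.diff_left sum_subtractf algebra_simps)

lemma normV_nonneg: "u \<in> vecs W \<Longrightarrow> normV l2 h1 \<mu> ht u \<ge> 0"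
  unfolding normV_eq by (simp add: sum_nonneg E.nonneg vecsD)

lemma normV_sq: "u \<in> vecs W \<Longrightarrow> (normV l2 h1 \<mu> ht u)\<^sup>2 = (\<Sum>i\<in>UNIV. energy (u i) (u i))"
  unfolding normV_eq by (simp add: sum_nonneg E.nonneg vecsD)

lemma energy_le_normV:
  assumes "u \<in> vecs W" shows "sqrt (energy (u j) (u j)) \<le> normV l2 h1 \<mu> ht u"
  unfolding normV_eq using assms by (simp, intro member_le_sum) (simp_all add: E.nonneg vecsD)

lemma abs_l2_le:
  assumes "x \<in> W" "y \<in> W" shows "\<bar>l2 x y\<bar> \<le> sqrt (energy x x) * sqrt (energy y y)"
proof -
  have "\<bar>l2 x y\<bar> \<le> sqrt (l2 x x) * sqrt (l2 y y)" using L.Cauchy_Schwarz_abs assms by blast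
  also have "\<dots> \<le> sqrt (energy x x) * sqrt (energy y y)"
    unfolding energy_def using assms H.nonneg L.nonneg ht_power_pos by (intro mult_mono) simp_all
  finally show ?thesis .
qed

lemma abs_h1_le:
  assumes "x \<in> W" "y \<in> W" shows "ht ^ \<mu> * \<bar>h1 x y\<bar> \<le> sqrt (energy x x) * sqrt (energy y y)"
proof -
  have "ht ^ \<mu> * \<bar>h1 x y\<bar> \<le> ht ^ \<mu> * (sqrt (h1 x x) * sqrt (h1 y y))"
    using H.Cauchy_Schwarz_abs assms ht_power_pos by (simp add: mult_left_mono)
  also have "\<dots> = sqrt (ht ^ \<mu> * h1 x x) * sqrt (ht ^ \<mu> * h1 y y)"
    using ht_power_pos by (simp add: real_sqrt_mult)
  also have "\<dots> \<le> sqrt (energy x x) * sqrt (energy y y)"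
    unfolding energy_def using assms H.nonneg L.nonneg ht_power_pos by (intro mult_mono) simp_all
  finally show ?thesis .
qed

end

context stage_setting
begin

lemma stage_form_bounded:
  fixes M :: "real^'n^'n"
  assumes u: "u \<in> vecs W" and v: "v \<in> vecs W"
  shows "\<bar>stage_form M u v\<bar> \<le> form_bound M * normV l2 h1 \<mu> ht u * normV l2 h1 \<mu> ht v"
proof -
  let ?N = "normV l2 h1 \<mu> ht u * normV l2 h1 \<mu> ht v"
  have prod: "sqrt (energy (u j) (u j)) * sqrt (energy (v i) (v i)) \<le> ?N" for i j
    using energy_le_normV[OF u, of j] energy_le_normV[OF v, of i] normV_nonneg[OF u]
      E.nonneg[OF vecsD[OF v]] by (intro mult_mono) simp_all
  have "\<bar>\<Sum>i\<in>UNIV. l2 (u i) (v i)\<bar> \<le> (\<Sum>i\<in>UNIV. \<bar>l2 (u i) (v i)\<bar>)" by (rule sum_abs)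
  also have "\<dots> \<le> (\<Sum>i\<in>(UNIV::'n set). ?N)"
  proof (rule sum_mono)
    fix i
    show "\<bar>l2 (u i) (v i)\<bar> \<le> ?N"
      using abs_l2_le[OF vecsD[OF u] vecsD[OF v], of i i] prod[of i i] by linarith
  qed
  finally have l2_part: "\<bar>\<Sum>i\<in>UNIV. l2 (u i) (v i)\<bar> \<le> real CARD('n) * ?N" by simp
  have "\<bar>ht ^ \<mu> * (\<Sum>i\<in>UNIV. \<Sum>j\<in>UNIV. M$i$j * h1 (u j) (v i))\<bar>
      = \<bar>\<Sum>i\<in>UNIV. \<Sum>j\<in>UNIV. M$i$j * (ht ^ \<mu> * h1 (u j) (v i))\<bar>"
    by (simp add: sum_distrib_left mult.left_commute)
  also have "\<dots> \<le> (\<Sum>i\<in>UNIV. \<Sum>j\<in>UNIV. \<bar>M$i$j * (ht ^ \<mu> * h1 (u j) (v i))\<bar>)"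
    by (rule order_trans[OF sum_abs sum_mono[OF sum_abs]])
  also have "\<dots> \<le> (\<Sum>i\<in>UNIV. \<Sum>j\<in>UNIV. \<bar>M$i$j\<bar> * ?N)"
  proof (intro sum_mono)
    fix i j
    have "ht ^ \<mu> * \<bar>h1 (u j) (v i)\<bar> \<le> ?N"
      using abs_h1_le[OF vecsD[OF u] vecsD[OF v], of j i] prod[of j i] by linarith
    then show "\<bar>M$i$j * (ht ^ \<mu> * h1 (u j) (v i))\<bar> \<le> \<bar>M$i$j\<bar> * ?N"
      using ht_power_pos by (simp add: abs_mult mult_left_mono)
  qed
  finally have h1_part: "\<bar>ht ^ \<mu> * (\<Sum>i\<in>UNIV. \<Sum>j\<in>UNIV. M$i$j * h1 (u j) (v i))\<bar>
      \<le> (\<Sum>i\<in>UNIV. \<Sum>j\<in>UNIV. \<bar>M$i$j\<bar>) * ?N" by (simp add: sum_distrib_right)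
  show ?thesis
    using abs_triangle_ineq[of "\<Sum>i\<in>UNIV. l2 (u i) (v i)"] l2_part h1_part
    unfolding stage_form_def form_bound_def by (simp add: algebra_simps)
qed

lemma mat_act_vecs: "u \<in> vecs W \<Longrightarrow> mat_act C u \<in> vecs W"
  unfolding mat_act_def vecs_def using L.subspace by (auto intro!: subspace_sum)

lemma normV_mat_act_le:
  fixes C :: "real^'n^'n"
  assumes u: "u \<in> vecs W"
  shows "normV l2 h1 \<mu> ht (mat_act C u) \<le> sqrt (mat_act_bound C) * normV l2 h1 \<mu> ht u"
proof -
  let ?N = "normV l2 h1 \<mu> ht u"
  have energy_bound: "\<bar>energy (u k) (u m)\<bar> \<le> ?N\<^sup>2" for k m
  proof -
    have "\<bar>energy (u k) (u m)\<bar> \<le> sqrt (energy (u k) (u k)) * sqrt (energy (u m) (u m))"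
      using E.Cauchy_Schwarz_abs vecsD[OF u] by blast
    also have "\<dots> \<le> ?N * ?N"
      using energy_le_normV[OF u] normV_nonneg[OF u] E.nonneg[OF vecsD[OF u]]
      by (intro mult_mono) simp_all
    finally show ?thesis by (simp add: power2_eq_square)
  qed
  have "(\<Sum>i\<in>UNIV. energy (mat_act C u i) (mat_act C u i))
      = (\<Sum>i\<in>UNIV. \<Sum>k\<in>UNIV. \<Sum>m\<in>UNIV. C$i$k * C$i$m * energy (u k) (u m))"
    unfolding mat_act_def using vecsD[OF u] by (simp add: E.bilinear_sum)
  also have "\<dots> \<le> (\<Sum>i\<in>UNIV. \<Sum>k\<in>UNIV. \<Sum>m\<in>(UNIV::'n set). \<bar>C$i$k\<bar> * \<bar>C$i$m\<bar> * ?N\<^sup>2)"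
  proof (intro sum_mono)
    fix i k m
    have "C$i$k * C$i$m * energy (u k) (u m) \<le> \<bar>C$i$k * C$i$m * energy (u k) (u m)\<bar>"
      by (rule abs_ge_self)
    also have "\<dots> = \<bar>C$i$k\<bar> * \<bar>C$i$m\<bar> * \<bar>energy (u k) (u m)\<bar>" by (simp add: abs_mult)
    also have "\<dots> \<le> \<bar>C$i$k\<bar> * \<bar>C$i$m\<bar> * ?N\<^sup>2" using energy_bound by (simp add: mult_left_mono)
    finally show "C$i$k * C$i$m * energy (u k) (u m) \<le> \<bar>C$i$k\<bar> * \<bar>C$i$m\<bar> * ?N\<^sup>2" .
  qed
  also have "\<dots> = mat_act_bound C * ?N\<^sup>2" unfolding mat_act_bound_def by (simp add: sum_distrib_right)
  finally have "(normV l2 h1 \<mu> ht (mat_act C u))\<^sup>2 \<le> mat_act_bound C * ?N\<^sup>2"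
    using normV_sq[OF mat_act_vecs[OF u]] by simp
  then have "normV l2 h1 \<mu> ht (mat_act C u) \<le> sqrt (mat_act_bound C * ?N\<^sup>2)"
    using normV_nonneg[OF mat_act_vecs[OF u]] by (simp add: real_le_rsqrt)
  then show ?thesis using normV_nonneg[OF u] by (simp add: real_sqrt_mult)
qed

lemma stage_form_coercive:
  fixes M C :: "real^'n^'n"
  assumes w: "wpd_witness M C \<alpha>" and u: "u \<in> vecs W"
  shows "\<alpha> * (normV l2 h1 \<mu> ht u)\<^sup>2 \<le> stage_form M u (mat_act C u)"
proof -
  have C_sym: "C$k$i = C$i$k" for i k
    using w unfolding wpd_witness_def by (metis transpose_def vec_lambda_beta)
  have lower_C: "\<And>x. \<alpha> * (x \<bullet> x) \<le> x \<bullet> (C *v x)"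
    and lower_CM: "\<And>x. \<alpha> * (x \<bullet> x) \<le> x \<bullet> ((C ** M) *v x)"
    using w unfolding wpd_witness_def by blast+
  have uW: "\<And>i. u i \<in> W" using vecsD[OF u] .
  have l2_eq: "(\<Sum>i\<in>UNIV. l2 (u i) (mat_act C u i)) = (\<Sum>i\<in>UNIV. \<Sum>k\<in>UNIV. C$i$k * l2 (u i) (u k))"
    unfolding mat_act_def using uW by (simp add: L.sum_right L.scaleR_right)
  have "(\<Sum>i\<in>UNIV. \<Sum>j\<in>UNIV. M$i$j * h1 (u j) (mat_act C u i))
      = (\<Sum>i\<in>UNIV. \<Sum>j\<in>UNIV. \<Sum>k\<in>UNIV. M$i$j * C$i$k * h1 (u j) (u k))"
    unfolding mat_act_def using uW by (simp add: H.sum_right H.scaleR_right sum_distrib_left mult.assoc)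
  also have "\<dots> = (\<Sum>j\<in>UNIV. \<Sum>i\<in>UNIV. \<Sum>k\<in>UNIV. M$i$j * C$i$k * h1 (u j) (u k))"
    by (rule sum.swap)
  also have "\<dots> = (\<Sum>j\<in>UNIV. \<Sum>k\<in>UNIV. \<Sum>i\<in>UNIV. M$i$j * C$i$k * h1 (u j) (u k))"
    by (rule sum.cong[OF refl], rule sum.swap)
  also have "\<dots> = (\<Sum>j\<in>UNIV. \<Sum>k\<in>UNIV. (C ** M)$k$j * h1 (u k) (u j))"
  proof (intro sum.cong refl)
    fix j k
    show "(\<Sum>i\<in>UNIV. M$i$j * C$i$k * h1 (u j) (u k)) = (C ** M)$k$j * h1 (u k) (u j)"
      by (simp add: matrix_matrix_mult_def H.sym[OF uW uW] sum_distrib_left C_sym mult_ac)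
  qed
  also have "\<dots> = (\<Sum>k\<in>UNIV. \<Sum>j\<in>UNIV. (C ** M)$k$j * h1 (u k) (u j))"
    by (rule sum.swap)
  finally have h1_eq: "(\<Sum>i\<in>UNIV. \<Sum>j\<in>UNIV. M$i$j * h1 (u j) (mat_act C u i))
      = (\<Sum>i\<in>UNIV. \<Sum>j\<in>UNIV. (C ** M)$i$j * h1 (u i) (u j))" .
  have "\<alpha> * (normV l2 h1 \<mu> ht u)\<^sup>2
      = \<alpha> * (\<Sum>i\<in>UNIV. l2 (u i) (u i)) + ht ^ \<mu> * (\<alpha> * (\<Sum>i\<in>UNIV. h1 (u i) (u i)))"
    unfolding normV_sq[OF u] energy_def by (simp add: sum.distrib sum_distrib_left algebra_simps)
  also have "\<dots> \<le> (\<Sum>i\<in>UNIV. \<Sum>k\<in>UNIV. C$i$k * l2 (u i) (u k))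
      + ht ^ \<mu> * (\<Sum>i\<in>UNIV. \<Sum>j\<in>UNIV. (C ** M)$i$j * h1 (u i) (u j))"
    using L.matrix_Gram_lower_bound[OF lower_C uW] H.matrix_Gram_lower_bound[OF lower_CM uW]
      ht_power_pos by (intro add_mono mult_left_mono) simp_all
  also have "\<dots> = stage_form M u (mat_act C u)" unfolding stage_form_def l2_eq h1_eq ..
  finally show ?thesis .
qed

end

context stage_setting
begin

abbreviation "Op M \<equiv> form_op l2 h1 \<mu> ht M W"
abbreviation "NV \<equiv> normV l2 h1 \<mu> ht"

lemma form_op_add:
  "u \<in> vecs W \<Longrightarrow> w \<in> vecs W \<Longrightarrow> Op M (\<lambda>i. u i + w i) = (\<lambda>v. Op M u v + Op M w v)"
  unfolding form_op_eq by (rule ext) (simp add: stage_form_add_left)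

lemma form_op_scaleR:
  "u \<in> vecs W \<Longrightarrow> Op M (\<lambda>i. a *\<^sub>R u i) = (\<lambda>v. a * Op M u v)"
  unfolding form_op_eq by (rule ext) (simp add: stage_form_scaleR_left)

lemma form_op_in_dual:
  assumes u: "u \<in> vecs W" shows "Op M u \<in> dual_space l2 h1 \<mu> ht W"
  unfolding dual_space_def form_op_eq
  using u stage_form_add_right stage_form_scaleR_right stage_form_bounded[OF u]
  by (auto simp: vecs_closed intro!: exI[of _ "form_bound M * NV u"])

lemma form_op_inj:
  assumes w: "wpd_witness M C \<alpha>" shows "inj_on (Op M) (vecs W)"
proof (rule inj_onI)
  fix u v assume u: "u \<in> vecs W" and v: "v \<in> vecs W" and eq: "Op M u = Op M v"
  define d where "d = (\<lambda>i. u i - v i)"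
  have d: "d \<in> vecs W" unfolding d_def using u v by (rule vecs_closed(3))
  have same: "stage_form M u z = stage_form M v z" if "z \<in> vecs W" for z
    using fun_cong[OF eq, of z] that unfolding form_op_eq by simp
  have Cd: "mat_act C d \<in> vecs W" using d by (rule mat_act_vecs)
  have "stage_form M d (mat_act C d) = stage_form M u (mat_act C d) - stage_form M v (mat_act C d)"
    unfolding d_def by (rule stage_form_diff_left[OF u v Cd[unfolded d_def]])
  then have "stage_form M d (mat_act C d) = 0" using same[OF Cd] by simp
  then have "\<alpha> * (NV d)\<^sup>2 \<le> 0" using stage_form_coercive[OF w d] by simp
  moreover have "\<alpha> > 0" using w unfolding wpd_witness_def by blast
  moreover have "(\<Sum>i\<in>UNIV. energy (d i) (d i)) \<ge> 0"
    using E.nonneg vecsD[OF d] by (simp add: sum_nonneg)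
  ultimately have "(\<Sum>i\<in>UNIV. energy (d i) (d i)) = 0"
    using normV_sq[OF d] by (simp add: mult_le_0_iff)
  then have "\<forall>i\<in>UNIV. energy (d i) (d i) = 0"
    using E.nonneg vecsD[OF d] by (subst (asm) sum_nonneg_eq_0_iff) auto
  then show "u = v" using E.square_eq_0_iff vecsD[OF d] unfolding d_def by (simp add: fun_eq_iff)
qed

lemma vec_carrier_nth: "x \<in> vec_carrier W \<Longrightarrow> vec_nth x \<in> vecs W"
  unfolding vec_carrier_def vecs_def by simp

lemma vec_carrier_lambda: "u \<in> vecs W \<Longrightarrow> vec_lambda u \<in> vec_carrier W"
  unfolding vec_carrier_def vecs_def by simp

lemma normV_vec_nth: "NV (vec_nth x) = sqrt (vec_form energy x x)"
  unfolding normV_eq vec_form_def by simp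

text \<open>Lax-Milgram is applied on the product space (identified with 'v^'n) to the form
  (u, v) \<mapsto> stage_form M u (C v), which is coercive by weak positive definiteness;
  invertibility of C then recovers all test functions.\<close>
lemma stage_form_solvable:
  fixes M C :: "real^'n^'n"
  assumes w: "wpd_witness M C \<alpha>" and f: "f \<in> dual_space l2 h1 \<mu> ht W"
  shows "\<exists>u\<in>vecs W. \<forall>v\<in>vecs W. stage_form M u v = f v"
proof -
  interpret V: inner_form "vec_carrier W :: ('v^'n) set" "vec_form energy"
    by (rule inner_form_vec[OF E.inner_form_axioms])
  have \<alpha>: "\<alpha> > 0" and "invertible C" using w unfolding wpd_witness_def by blast+
  then obtain B where B: "C ** B = mat 1" unfolding invertible_right_inverse by blast
  have f_add: "\<And>v w. v \<in> vecs W \<Longrightarrow> w \<in> vecs W \<Longrightarrow> f (\<lambda>i. v i + w i) = f v + f w"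
    and f_scaleR: "\<And>c v. v \<in> vecs W \<Longrightarrow> f (\<lambda>i. c *\<^sub>R v i) = c * f v"
    using f unfolding dual_space_def by blast+
  obtain K where K: "\<And>v. v \<in> vecs W \<Longrightarrow> \<bar>f v\<bar> \<le> K * NV v"
    using f unfolding dual_space_def by blast
  let ?a = "\<lambda>x y :: 'v^'n. stage_form M (vec_nth x) (mat_act C (vec_nth y))"
  let ?f = "\<lambda>y :: 'v^'n. f (mat_act C (vec_nth y))"
  note in_vecs = vec_carrier_nth mat_act_vecs
  have vec_nth_ops: "vec_nth (x + y) = (\<lambda>i. x$i + y$i)" "vec_nth (c *\<^sub>R x) = (\<lambda>i. c *\<^sub>R x$i)"
    for x y :: "'v^'n" and c by auto
  have act_bound: "NV (mat_act C (vec_nth y)) \<le> sqrt (mat_act_bound C) * sqrt (vec_form energy y y)"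
    if "y \<in> vec_carrier W" for y
    using normV_mat_act_le[OF vec_carrier_nth[OF that]] unfolding normV_vec_nth .
  have "\<bar>?f y\<bar> \<le> max K 0 * sqrt (mat_act_bound C) * sqrt (vec_form energy y y)"
    if y: "y \<in> vec_carrier W" for y
  proof -
    have "\<bar>?f y\<bar> \<le> max K 0 * NV (mat_act C (vec_nth y))"
      using K[OF in_vecs(2)[OF in_vecs(1)[OF y]]] normV_nonneg[OF in_vecs(2)[OF in_vecs(1)[OF y]]]
      by (meson max.cobounded1 mult_right_mono order_trans)
    then show ?thesis using act_bound[OF y] by (simp add: mult.assoc mult_left_mono order_trans)
  qed
  then have f': "bounded_functional_on (vec_carrier W) (vec_form energy) ?f"
    unfolding bounded_functional_on_def vec_nth_ops mat_act_add mat_act_scaleR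
    by (auto simp: f_add f_scaleR in_vecs vecs_closed)
  have "\<exists>x\<in>vec_carrier W. \<forall>y\<in>vec_carrier W. ?a x y = ?f y"
  proof (rule V.Lax_Milgram[OF complete_wrt_vec[OF E.psd_form_axioms complete_energy] _ _ _ _ _ _ _ \<alpha> f',
        where M = "form_bound M * sqrt (mat_act_bound C)"])
    fix x y :: "'v^'n" assume x: "x \<in> vec_carrier W" and y: "y \<in> vec_carrier W"
    have "\<bar>?a x y\<bar> \<le> form_bound M * NV (vec_nth x) * NV (mat_act C (vec_nth y))"
      by (rule stage_form_bounded[OF in_vecs(1)[OF x] in_vecs(2)[OF in_vecs(1)[OF y]]])
    also have "\<dots> \<le> form_bound M * NV (vec_nth x) * (sqrt (mat_act_bound C) * sqrt (vec_form energy y y))"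
      using act_bound[OF y] form_bound_nonneg[of M] normV_nonneg[OF in_vecs(1)[OF x]]
      by (intro mult_left_mono) simp_all
    finally show "\<bar>?a x y\<bar> \<le> form_bound M * sqrt (mat_act_bound C)
        * sqrt (vec_form energy x x) * sqrt (vec_form energy y y)"
      unfolding normV_vec_nth by (simp add: mult_ac)
  next
    fix x :: "'v^'n" assume x: "x \<in> vec_carrier W"
    show "\<alpha> * vec_form energy x x \<le> ?a x x"
      using stage_form_coercive[OF w in_vecs(1)[OF x]] V.nonneg[OF x] unfolding normV_vec_nth by simp
  qed (auto simp: vec_nth_ops mat_act_add mat_act_scaleR in_vecs vecs_closed stage_form_add_left
      stage_form_scaleR_left stage_form_add_right stage_form_scaleR_right
      form_bound_nonneg mat_act_bound_nonneg)
  then obtain x where x: "x \<in> vec_carrier W" "\<And>y. y \<in> vec_carrier W \<Longrightarrow> ?a x y = ?f y" by blast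
  have "stage_form M (vec_nth x) v = f v" if v: "v \<in> vecs W" for v
    using x(2)[OF vec_carrier_lambda[OF mat_act_vecs[OF v, of B]]]
    by (simp add: vec_lambda_inverse mat_act_mult B mat_act_id)
  then show ?thesis using in_vecs(1)[OF x(1)] by blast
qed

lemma form_op_bij:
  assumes w: "wpd_witness M C \<alpha>"
  shows "bij_betw (Op M) (vecs W) (dual_space l2 h1 \<mu> ht W)"
proof -
  have "f \<in> Op M ` vecs W" if f: "f \<in> dual_space l2 h1 \<mu> ht W" for f
  proof -
    obtain u where u: "u \<in> vecs W" "\<And>v. v \<in> vecs W \<Longrightarrow> stage_form M u v = f v"
      using stage_form_solvable[OF w f] by blast
    have "Op M u = f"
      using u f unfolding form_op_eq dual_space_def by (auto simp: fun_eq_iff)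
    then show ?thesis using u(1) by blast
  qed
  then show ?thesis
    unfolding bij_betw_def using form_op_inj[OF w] form_op_in_dual by blast
qed

end

section \<open>The preconditioned operators\<close>

lemma op_norm_le:
  assumes "\<And>v. v \<in> vecs W \<Longrightarrow> normV l2 h1 \<mu> ht (T v) \<le> K * normV l2 h1 \<mu> ht v" "K \<ge> 0"
  shows "op_norm l2 h1 \<mu> ht W T \<le> K" "op_norm l2 h1 \<mu> ht W T \<ge> 0"
proof -
  define S where "S = {K. 0 \<le> K \<and> (\<forall>v\<in>vecs W. normV l2 h1 \<mu> ht (T v) \<le> K * normV l2 h1 \<mu> ht v)}"
  have KS: "K \<in> S" unfolding S_def using assms by blast
  have "bdd_below S" unfolding S_def by (rule bdd_belowI[of _ 0]) blast
  then show "op_norm l2 h1 \<mu> ht W T \<le> K" unfolding op_norm_def S_def[symmetric]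
    using KS by (rule cInf_lower[rotated])
  show "op_norm l2 h1 \<mu> ht W T \<ge> 0" unfolding op_norm_def S_def[symmetric]
    using KS by (intro cInf_greatest) (auto simp: S_def)
qed

context stage_setting
begin

abbreviation "DS \<equiv> dual_space l2 h1 \<mu> ht W"

abbreviation precond :: "real^'n^'n \<Rightarrow> real^'n^'n \<Rightarrow> ('n::finite \<Rightarrow> 'v) \<Rightarrow> 'n \<Rightarrow> 'v" where
  "precond M N \<equiv> the_inv_into (vecs W) (Op N) \<circ> Op M"

lemma precond_solves:
  assumes N: "bij_betw (Op N) (vecs W) DS" and u: "u \<in> vecs W"
  shows "precond M N u \<in> vecs W" "Op N (precond M N u) = Op M u"
proof -
  have "Op M u \<in> Op N ` vecs W" using form_op_in_dual[OF u] N unfolding bij_betw_def by simp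
  then show "precond M N u \<in> vecs W" "Op N (precond M N u) = Op M u"
    using the_inv_into_into[of "Op N" "vecs W"] f_the_inv_into_f[of "Op N" "vecs W"] N
    unfolding bij_betw_def by auto
qed

lemma precond_linear:
  assumes N: "bij_betw (Op N) (vecs W) DS" and u: "u \<in> vecs W" and v: "v \<in> vecs W"
  shows "precond M N (\<lambda>i. u i + v i) = (\<lambda>i. precond M N u i + precond M N v i)"
    and "precond M N (\<lambda>i. c *\<^sub>R u i) = (\<lambda>i. c *\<^sub>R precond M N u i)"
proof -
  note T = precond_solves[OF N, where M = M]
  have inj: "inj_on (Op N) (vecs W)" using N unfolding bij_betw_def by blast
  show "precond M N (\<lambda>i. u i + v i) = (\<lambda>i. precond M N u i + precond M N v i)"
    using T[OF vecs_closed(1)[OF u v]] T[OF u] T[OF v] vecs_closed(1)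
      form_op_add[OF u v] form_op_add[of "precond M N u" "precond M N v" N]
    by (intro inj_onD[OF inj]) auto
  show "precond M N (\<lambda>i. c *\<^sub>R u i) = (\<lambda>i. c *\<^sub>R precond M N u i)"
    using T[OF vecs_closed(2)[OF u]] T[OF u] vecs_closed(2)
      form_op_scaleR[OF u] form_op_scaleR[of "precond M N u" N c]
    by (intro inj_onD[OF inj]) auto
qed

text \<open>The key estimate: testing Op N (T u) = Op M u with CN (T u) bounds T u by u,
  with a constant independent of ht and of the subspace.\<close>
lemma precond_norm_le:
  assumes wN: "wpd_witness N CN \<alpha>N" and u: "u \<in> vecs W"
  shows "NV (precond M N u) \<le> (form_bound M * sqrt (mat_act_bound CN) / \<alpha>N) * NV u"
proof -
  define w where "w = precond M N u"
  have w: "w \<in> vecs W" "Op N w = Op M u"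
    unfolding w_def using precond_solves[OF form_op_bij[OF wN] u] by auto
  have Cw: "mat_act CN w \<in> vecs W" using mat_act_vecs w(1) .
  have \<alpha>N: "\<alpha>N > 0" using wN unfolding wpd_witness_def by simp
  have "\<alpha>N * (NV w)\<^sup>2 \<le> stage_form N w (mat_act CN w)" by (rule stage_form_coercive[OF wN w(1)])
  also have "\<dots> = stage_form M u (mat_act CN w)"
    using fun_cong[OF w(2), of "mat_act CN w"] Cw unfolding form_op_eq by simp
  also have "\<dots> \<le> form_bound M * NV u * NV (mat_act CN w)"
    using stage_form_bounded[OF u Cw, of M] by linarith
  also have "\<dots> \<le> form_bound M * NV u * (sqrt (mat_act_bound CN) * NV w)"
    using normV_mat_act_le[OF w(1), of CN] form_bound_nonneg[of M] normV_nonneg[OF u]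
    by (intro mult_left_mono) simp_all
  finally have "\<alpha>N * NV w * NV w \<le> (form_bound M * sqrt (mat_act_bound CN) * NV u) * NV w"
    by (simp add: power2_eq_square mult_ac)
  then have "\<alpha>N * NV w \<le> form_bound M * sqrt (mat_act_bound CN) * NV u"
    using normV_nonneg[OF w(1)] normV_nonneg[OF u] form_bound_nonneg[of M]
      mat_act_bound_nonneg[of CN] \<alpha>N
    by (cases "NV w = 0") (simp_all add: mult_nonneg_nonneg)
  then show ?thesis unfolding w_def using \<alpha>N by (simp add: field_simps)
qed

lemma precond_bounded_op:
  assumes wN: "wpd_witness N CN \<alpha>N"
  shows "bounded_op l2 h1 \<mu> ht W (precond M N)"
  unfolding bounded_op_def
  using precond_solves(1)[OF form_op_bij[OF wN]] precond_linear[OF form_op_bij[OF wN]]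
    precond_norm_le[OF wN]
  by blast

lemma precond_bij:
  assumes wM: "wpd_witness M CM \<alpha>M" and wN: "wpd_witness N CN \<alpha>N"
  shows "bij_betw (precond M N) (vecs W) (vecs W)"
proof -
  have bij1: "bij_betw (Op M) (vecs W) DS" and bij2: "bij_betw (Op N) (vecs W) DS"
    using form_op_bij wM wN by blast+
  have "bij_betw (the_inv_into (vecs W) (Op N)) DS (vecs W)"
    using bij2 by (rule bij_betw_the_inv_into)
  then show ?thesis using bij_betw_trans[OF bij1] by blast
qed

lemma precond_bound_holds:
  assumes wA: "wpd_witness A CA \<alpha>A" and wP: "wpd_witness P CP \<alpha>P"
  shows "precond_bound l2 h1 \<mu> ht A P W
    ((form_bound A * sqrt (mat_act_bound CP) / \<alpha>P) * (form_bound P * sqrt (mat_act_bound CA) / \<alpha>A))"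
proof -
  have nonneg: "form_bound M * sqrt (mat_act_bound C) / \<alpha> \<ge> 0" if "wpd_witness N C \<alpha>" for M N C \<alpha>
    using that form_bound_nonneg[of M] mat_act_bound_nonneg[of C] unfolding wpd_witness_def by simp
  have inverse: "precond P A (precond A P u) = u" if u: "u \<in> vecs W" for u
    using precond_solves(2)[OF form_op_bij[OF wP] u] the_inv_into_f_f[OF form_op_inj[OF wA] u] by simp
  have "op_norm l2 h1 \<mu> ht W (precond A P) * op_norm l2 h1 \<mu> ht W (precond P A)
      \<le> (form_bound A * sqrt (mat_act_bound CP) / \<alpha>P) * (form_bound P * sqrt (mat_act_bound CA) / \<alpha>A)"
    using op_norm_le[where W = W, OF precond_norm_le[OF wP, where M = A] nonneg[OF wP, of A]]
      op_norm_le[where W = W, OF precond_norm_le[OF wA, where M = P] nonneg[OF wA, of P]]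
    by (intro mult_mono) (simp_all add: comp_def)
  then show ?thesis
    unfolding precond_bound_def Let_def
    using form_op_bij[OF wA] form_op_bij[OF wP] precond_bij[OF wA wP]
      precond_bounded_op[OF wP] precond_bounded_op[OF wA] inverse
    by blast
qed

end

lemma psd_form_subspace:
  assumes "psd_form V b" "subspace W" "W \<subseteq> V" shows "psd_form W b"
  using assms unfolding psd_form_def sym_bilinear_on_def by blast

lemma stage_setting_if_energy_space:
  assumes E: "energy_space V l2 h1" and ht: "ht > 0"
  shows "stage_setting l2 h1 V \<mu> ht"
proof -
  have V: "subspace V" and l2: "sym_bilinear_on V l2" and h1: "sym_bilinear_on V h1"
    and l2_pos: "\<And>u. u \<in> V \<Longrightarrow> u \<noteq> 0 \<Longrightarrow> l2 u u > 0" and h1_nonneg: "\<And>u. u \<in> V \<Longrightarrow> h1 u u \<ge> 0"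
    and complete: "complete_wrt V (\<lambda>x y. l2 x y + h1 x y)"
    using E unfolding energy_space_def complete_wrt_def by blast+
  have "l2 0 0 = 0" using l2 V subspace_0 scaleR_zero_left unfolding sym_bilinear_on_def
    by (metis mult_zero_left)
  then have l2_nonneg: "\<And>u. u \<in> V \<Longrightarrow> l2 u u \<ge> 0" using l2_pos by (metis less_eq_real_def)
  have c: "ht ^ \<mu> > 0" using ht by simp
  have "complete_wrt V (\<lambda>x y. l2 x y + ht ^ \<mu> * h1 x y)"
  proof (rule complete_wrt_equivalent[OF V _ _ _ _ complete, where m = "min 1 (ht ^ \<mu>)" and K = "max 1 (ht ^ \<mu>)"])
    fix x assume x: "x \<in> V"
    note nn = l2_nonneg[OF x] h1_nonneg[OF x]
    show "0 \<le> l2 x x + h1 x x" using nn by simp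
    show "min 1 (ht ^ \<mu>) * (l2 x x + h1 x x) \<le> l2 x x + ht ^ \<mu> * h1 x x"
      using nn c by (simp add: distrib_left add_mono mult_right_mono mult_left_le_one_le)
    show "l2 x x + ht ^ \<mu> * h1 x x \<le> max 1 (ht ^ \<mu>) * (l2 x x + h1 x x)"
      using nn by (simp add: distrib_left add_mono mult_right_mono mult_le_cancel_right1)
  qed (use c in simp)
  then show ?thesis
    unfolding stage_setting_def psd_form_def using V l2 h1 l2_pos l2_nonneg h1_nonneg ht by blast
qed

lemma stage_setting_finite_subspace:
  assumes S: "stage_setting l2 h1 V \<mu> ht" and Vh: "subspace Vh" "Vh \<subseteq> V" and B: "finite B" "Vh = span B"
  shows "stage_setting l2 h1 Vh \<mu> ht"
proof -
  interpret stage_setting l2 h1 V \<mu> ht by (rule S)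
  have "B \<subseteq> V" using B Vh span_superset by blast
  then have "complete_wrt Vh (\<lambda>x y. l2 x y + ht ^ \<mu> * h1 x y)"
    using E.complete_span[OF B(1)] B(2) unfolding energy_def[abs_def] by simp
  then show ?thesis
    unfolding stage_setting_def using psd_form_subspace[OF l2 Vh] psd_form_subspace[OF h1 Vh] l2_pos Vh(2) ht
    by blast
qed

theorem mainTheorem2:
  fixes A P :: "real^'n::finite^'n"
  assumes "weakly_pos_def A" and "weakly_pos_def P"
  shows "\<exists>C::real. \<forall>(V::'v::real_vector set) l2 h1 (\<mu>::nat) (ht::real).
           energy_space V l2 h1 \<and> \<mu> \<in> {1, 2} \<and> ht > 0 \<longrightarrow>
             precond_bound l2 h1 \<mu> ht A P V C
           \<and> (\<forall>Vh. subspace Vh \<and> Vh \<subseteq> V \<and> (\<exists>B. finite B \<and> Vh = span B) \<longrightarrow>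
                 precond_bound l2 h1 \<mu> ht A P Vh C)"
proof -
  obtain CA \<alpha>A CP \<alpha>P where wA: "wpd_witness A CA \<alpha>A" and wP: "wpd_witness P CP \<alpha>P"
    using weakly_pos_def_witness assms by metis
  define C where "C = (form_bound A * sqrt (mat_act_bound CP) / \<alpha>P) * (form_bound P * sqrt (mat_act_bound CA) / \<alpha>A)"
  have bound: "precond_bound l2 h1 \<mu> ht A P W C" if "stage_setting l2 h1 W \<mu> ht"
    for l2 h1 :: "'v \<Rightarrow> 'v \<Rightarrow> real" and W \<mu> ht
    unfolding C_def using stage_setting.precond_bound_holds[OF that wA wP] .
  show ?thesis
    using bound stage_setting_if_energy_space stage_setting_finite_subspace by blast
qed

end
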